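(* Assume $(\boldsymbol\lambda,\boldsymbol\mu)$ satisfies (H) (notation as there), that $(\gamma,\delta)\ne(0,0)$ and that $h\equiv\eta\pmod{nl}$ with $\eta\in\{\gamma,\delta\}$. Let $N$ be the length of the unique good sequence with respect to $(\lambda,\mu)$. Then $$(-1)^{N-1}=(-1)^{\mathrm{ht}(\rho)+\mathrm{ht}(\rho')}\,\varepsilon(\boldsymbol\lambda,\boldsymbol\mu)\,\varepsilon,$$ where $\varepsilon(\boldsymbol\lambda,\boldsymbol\mu)=(-1)^{\kappa(\mathbf d(\mu))+\ell(v(\omega.\boldsymbol\beta(\mu)))+\ell(v(\boldsymbol\beta(\lambda)))}$ and $\varepsilon=1$ if $\delta>0$ and $h\equiv\delta\pmod{nl}$, $\varepsilon=-1$ otherwise.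
   Context: Fix $n,l,m\ge1$, $\mathbf s_l=(s_1,\dots,s_l)\in\mathbb Z^l$, $s=\sum s_b$. Partitions are identified with Young diagrams. Ribbon: nonempty connected skew diagram with no $2\times2$ square; head/tail = node with $j-i$ minimal/maximal; $\mathrm{ht}$ = row of head minus row of tail. Each $k\in\mathbb Z$ is uniquely $k=c(k)+n(d(k)-1)+nl\,m(k)$, $c(k)\in\{1..n\}$, $d(k)\in\{1..l\}$; $\phi(k)=c(k)+n\,m(k)$. $\Pi^l_m$ = $l$-tuples of partitions of total size $m$; $\boldsymbol\lambda\leftrightarrow\lambda$ iff $\{(\lambda^{(b)}_i+s_b+1-i,b)\}=\{(\phi(k),d(k)):k\in\{\lambda_i+s+1-i:i\ge1\}\}$; $\boldsymbol\lambda\prec\boldsymbol\mu$ iff $\lambda\lhd\mu$ (strict dominance). For $|\lambda|=r$, $\boldsymbol\beta(\lambda)=(\lambda_i+s+1-i)_{i\le r}$, $B(\lambda)$ its set. Tuples: $\mathbf d(\mathbf k)=(d(k_i))_i$; $\sigma.(k_1,\dots,k_r)=(k_{\sigma^{-1}(1)},\dots)$; $v(\mathbf k)$ is the minimal-length $\sigma\in\mathfrak S_r$ with $\mathbf d(\mathbf k)=\sigma.\mathbf b$, $\mathbf b$ the weakly decreasing rearrangement of $\mathbf d(\mathbf k)$; $\ell$ Coxeter length; $\kappa(\mathbf a)=\#\{i<j:a_i=a_j\}$; $\omega$ longest element; $\mathbf d(\mu)=\mathbf d(\boldsymbol\beta(\mu))$. (J1): $\boldsymbol\lambda\ne\boldsymbol\mu$,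 there are $d\ne d'$ with $\mu^{(d)}\subset\lambda^{(d)}$, $\lambda^{(d')}\subset\mu^{(d')}$, $\lambda^{(b)}=\mu^{(b)}$ otherwise, $\rho:=\lambda^{(d)}/\mu^{(d)}$, $\rho':=\mu^{(d')}/\lambda^{(d')}$ ribbons of common length. (J2): $\boldsymbol\lambda\ne\boldsymbol\mu$, there is $d$ with $\lambda^{(b)}=\mu^{(b)}$ for $b\ne d$, $\rho:=\lambda^{(d)}/(\lambda^{(d)}\cap\mu^{(d)})$, $\rho':=\mu^{(d)}/(\lambda^{(d)}\cap\mu^{(d)})$ ribbons of common length. (H): $\boldsymbol\lambda\leftrightarrow\lambda$, $\boldsymbol\mu\leftrightarrow\mu$, $\boldsymbol\lambda\prec\boldsymbol\mu$, $|\lambda|=|\mu|=r$, $\#(B(\lambda)\cap B(\mu))=r-2$. Under (H), (J1) or (J2) holds (giving $\rho,\rho'$); $\boldsymbol\beta(\mu)=(\beta_i)$; $\lambda/(\lambda\cap\mu)$ and $\mu/(\lambda\cap\mu)$ are ribbons of common length $h$; $x$ = row of the head of $\lambda/(\lambda\cap\mu)$, $y$ = row of the tail of $\mu/(\lambda\cap\mu)$; $B(\lambda)=(B(\mu)\setminus\{\beta_x,\beta_y\})\cup\{\beta_x+h,\beta_y-h\}$; $\gamma,\delta\in\{0..nl-1\}$ are the residues mod $nl$ of $c(\beta_y)-c(\beta_x)$ and $n(d(\beta_y)-d(\beta_x))$. Wedge space (Uglov): $\mathbb C(q)$-span of $v_{k_1}\wedge v_{k_2}\wedge\cdots$ ($k_i=s+1-i$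 for $i\gg0$) with basis the ordered symbols; an adjacent pair $v_{k_1}\wedge v_{k_2}$, $k_1\le k_2$, is straightened by (with $\gamma',\delta'$ the residues mod $nl$ of $c(k_2)-c(k_1)$, $n(d(k_2)-d(k_1))$; sums over $i$ giving ordered two-factor wedges): (R1) $\gamma'=\delta'=0$: $v_{k_1}\wedge v_{k_2}=-v_{k_2}\wedge v_{k_1}$. (R2) $\gamma'>0,\delta'=0$: $=-q^{-1}v_{k_2}\wedge v_{k_1}-(q^{-2}-1)\sum_{i\ge1}q^{-2i+1}v_{k_2-nli}\wedge v_{k_1+nli}+(q^{-2}-1)\sum_{i\ge0}q^{-2i}v_{k_2-\gamma'-nli}\wedge v_{k_1+\gamma'+nli}$. (R3) $\gamma'=0,\delta'>0$: $=-qv_{k_2}\wedge v_{k_1}-(q^2-1)\sum_{i\ge1}q^{2i-1}v_{k_2-nli}\wedge v_{k_1+nli}+(q^2-1)\sum_{i\ge0}q^{2i}v_{k_2-\delta'-nli}\wedge v_{k_1+\delta'+nli}$. (R4) $\gamma',\delta'>0$: $=-v_{k_2}\wedge v_{k_1}-(q-q^{-1})\sum_{i\ge1}\frac{q^{2i}-q^{-2i}}{q+q^{-1}}v_{k_2-nli}\wedge v_{k_1+nli}-(q-q^{-1})\sum_{i\ge0}\frac{q^{2i+1}+q^{-2i-1}}{q+q^{-1}}v_{k_2-\gamma'-nli}\wedge v_{k_1+\gamma'+nli}+(q-q^{-1})\sum_{i\ge0}\frac{q^{2i+1}+q^{-2i-1}}{q+q^{-1}}v_{k_2-\delta'-nli}\wedge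 v_{k_1+\delta'+nli}+(q-q^{-1})\sum_{i\ge0}\frac{q^{2i+2}-q^{-2i-2}}{q+q^{-1}}v_{k_2-\gamma'-\delta'-nli}\wedge v_{k_1+\gamma'+\delta'+nli}$. Sequences: wedges $v_{\mathbf k}$ with first $r$ indices $\mathbf k$ and fixed tail $s-r,s-r-1,\dots$; $v_\lambda=v_{\boldsymbol\beta(\lambda)}$, $v_{\omega.\mu}=v_{\omega.\boldsymbol\beta(\mu)}$. $v_{\mathbf k}\to v_{\mathbf l}$ if there is $i$ with $k_i\le k_{i+1}$, $k_j>k_{j+1}$ for $j<i$, $k_j=l_j$ for $j\notin\{i,i+1\}$, and $v_{l_i}\wedge v_{l_{i+1}}$ has nonzero coefficient in the straightening of $v_{k_i}\wedge v_{k_{i+1}}$ by the applicable rule; such a step has $m=0$ if $(l_i,l_{i+1})=(k_{i+1},k_i)$, else $m=1$. A good sequence for $(\lambda,\mu)$ is a chain $v_{\omega.\mu}=v_{\mathbf k_0}\to\cdots\to v_{\mathbf k_N}=v_\lambda$ with total $m$ equal to $1$; $N$ is its length. Under the hypotheses such a sequence exists and is unique. *)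

theory Defs
  imports Complex_Main "HOL-Combinatorics.Permutations" "HOL-Number_Theory.Cong"
begin

definition is_partition :: "nat list \<Rightarrow> bool" where
  "is_partition lam \<longleftrightarrow> sorted_wrt (\<ge>) lam \<and> 0 \<notin> set lam"

text \<open>The i-th part (1-indexed), 0 beyond the length.\<close>
definition partI :: "nat list \<Rightarrow> nat \<Rightarrow> nat" where
  "partI lam i = (if 1 \<le> i \<and> i \<le> length lam then lam ! (i - 1) else 0)"

text \<open>Young diagram: nodes (row, column), both 1-indexed.\<close>
definition diagram :: "nat list \<Rightarrow> (nat \<times> nat) set" where
  "diagram lam = {(i, j). 1 \<le> i \<and> 1 \<le> j \<and> j \<le> partI lam i}"

definition adjacent :: "nat \<times> nat \<Rightarrow> nat \<times> nat \<Rightarrow> bool" where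
  "adjacent p q \<longleftrightarrow>
     (fst p = fst q \<and> (snd p = snd q + 1 \<or> snd q = snd p + 1)) \<or>
     (snd p = snd q \<and> (fst p = fst q + 1 \<or> fst q = fst p + 1))"

definition connected_nodes :: "(nat \<times> nat) set \<Rightarrow> bool" where
  "connected_nodes S \<longleftrightarrow>
     (\<forall>p\<in>S. \<forall>q\<in>S. (p, q) \<in> {(a, b). a \<in> S \<and> b \<in> S \<and> adjacent a b}\<^sup>*)"

definition ribbon :: "(nat \<times> nat) set \<Rightarrow> bool" where
  "ribbon S \<longleftrightarrow> S \<noteq> {} \<and> finite S \<and> connected_nodes S \<and>
     \<not> (\<exists>i j. (i, j) \<in> S \<and> (i + 1, j) \<in> S \<and> (i, j + 1) \<in> S \<and> (i + 1, j + 1) \<in> S)"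

definition content :: "nat \<times> nat \<Rightarrow> int" where
  "content p = int (snd p) - int (fst p)"

definition head :: "(nat \<times> nat) set \<Rightarrow> nat \<times> nat" where
  "head S = (THE p. p \<in> S \<and> (\<forall>q\<in>S. content p \<le> content q))"

definition tail :: "(nat \<times> nat) set \<Rightarrow> nat \<times> nat" where
  "tail S = (THE p. p \<in> S \<and> (\<forall>q\<in>S. content q \<le> content p))"

definition ht :: "(nat \<times> nat) set \<Rightarrow> int" where
  "ht S = int (fst (head S)) - int (fst (tail S))"

definition dominance_lt :: "nat list \<Rightarrow> nat list \<Rightarrow> bool" where
  "dominance_lt lam mu \<longleftrightarrow> sum_list lam = sum_list mu \<and>
     (\<forall>k. (\<Sum>i=1..k. partI lam i) \<le> (\<Sum>i=1..k. partI mu i)) \<and> lam \<noteq> mu"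

section \<open>The decomposition k = c(k) + n(d(k)-1) + nl m(k)\<close>

definition cc :: "nat \<Rightarrow> nat \<Rightarrow> int \<Rightarrow> int" where
  "cc n l k = (k - 1) mod (int n * int l) mod int n + 1"

definition dd :: "nat \<Rightarrow> nat \<Rightarrow> int \<Rightarrow> int" where
  "dd n l k = (k - 1) mod (int n * int l) div int n + 1"

definition mm :: "nat \<Rightarrow> nat \<Rightarrow> int \<Rightarrow> int" where
  "mm n l k = (k - 1) div (int n * int l)"

definition phi :: "nat \<Rightarrow> nat \<Rightarrow> int \<Rightarrow> int" where
  "phi n l k = cc n l k + int n * mm n l k"

text \<open>l-multipartitions: lists of length l; component b (1 \<le> b \<le> l) is entry b-1.\<close>
definition Pi_multi :: "nat \<Rightarrow> nat \<Rightarrow> nat list list set" where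
  "Pi_multi l m = {lams. length lams = l \<and> (\<forall>x\<in>set lams. is_partition x) \<and>
                        sum_list (map sum_list lams) = m}"

text \<open>Charges: ss is the list (s_1,...,s_l), s = sum_list ss.\<close>
definition corresp :: "nat \<Rightarrow> nat \<Rightarrow> int list \<Rightarrow> nat list list \<Rightarrow> nat list \<Rightarrow> bool" where
  "corresp n l ss lams lam \<longleftrightarrow>
     {(int (partI (lams ! (b - 1)) i) + ss ! (b - 1) + 1 - int i, int b) | b i.
         1 \<le> b \<and> b \<le> l \<and> 1 \<le> i}
   = {(phi n l k, dd n l k) | k. k \<in> {int (partI lam i) + sum_list ss + 1 - int i | i. 1 \<le> i}}"

definition beta :: "int \<Rightarrow> nat list \<Rightarrow> int list" where
  "beta s lam = map (\<lambda>i. int (partI lam i) + s + 1 - int i) [1..<sum_list lam + 1]"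

definition Bset :: "int \<Rightarrow> nat list \<Rightarrow> int set" where
  "Bset s lam = set (beta s lam)"

definition condH :: "nat \<Rightarrow> nat \<Rightarrow> int list \<Rightarrow> nat list list \<Rightarrow> nat list list
                      \<Rightarrow> nat list \<Rightarrow> nat list \<Rightarrow> bool" where
  "condH n l ss lams mus lam mu \<longleftrightarrow>
     corresp n l ss lams lam \<and> corresp n l ss mus mu \<and> dominance_lt lam mu \<and>
     sum_list lam = sum_list mu \<and>
     int (card (Bset (sum_list ss) lam \<inter> Bset (sum_list ss) mu)) = int (sum_list mu) - 2"

definition condJ1 :: "nat \<Rightarrow> nat list list \<Rightarrow> nat list list \<Rightarrow> nat \<Rightarrow> nat
                       \<Rightarrow> (nat \<times> nat) set \<Rightarrow> (nat \<times> nat) set \<Rightarrow> bool" where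
  "condJ1 l lams mus d d' rho rho' \<longleftrightarrow>
     lams \<noteq> mus \<and> d \<noteq> d' \<and> 1 \<le> d \<and> d \<le> l \<and> 1 \<le> d' \<and> d' \<le> l \<and>
     diagram (mus ! (d - 1)) \<subseteq> diagram (lams ! (d - 1)) \<and>
     diagram (lams ! (d' - 1)) \<subseteq> diagram (mus ! (d' - 1)) \<and>
     (\<forall>b. 1 \<le> b \<and> b \<le> l \<and> b \<noteq> d \<and> b \<noteq> d' \<longrightarrow> lams ! (b - 1) = mus ! (b - 1)) \<and>
     rho = diagram (lams ! (d - 1)) - diagram (mus ! (d - 1)) \<and>
     rho' = diagram (mus ! (d' - 1)) - diagram (lams ! (d' - 1)) \<and>
     ribbon rho \<and> ribbon rho' \<and> card rho = card rho'"

definition condJ2 :: "nat \<Rightarrow> nat list list \<Rightarrow> nat list list \<Rightarrow> nat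
                       \<Rightarrow> (nat \<times> nat) set \<Rightarrow> (nat \<times> nat) set \<Rightarrow> bool" where
  "condJ2 l lams mus d rho rho' \<longleftrightarrow>
     lams \<noteq> mus \<and> 1 \<le> d \<and> d \<le> l \<and>
     (\<forall>b. 1 \<le> b \<and> b \<le> l \<and> b \<noteq> d \<longrightarrow> lams ! (b - 1) = mus ! (b - 1)) \<and>
     rho = diagram (lams ! (d - 1)) - (diagram (lams ! (d - 1)) \<inter> diagram (mus ! (d - 1))) \<and>
     rho' = diagram (mus ! (d - 1)) - (diagram (lams ! (d - 1)) \<inter> diagram (mus ! (d - 1))) \<and>
     ribbon rho \<and> ribbon rho' \<and> card rho = card rho'"

definition rho_pair :: "nat \<Rightarrow> nat list list \<Rightarrow> nat list list
                         \<Rightarrow> (nat \<times> nat) set \<Rightarrow> (nat \<times> nat) set \<Rightarrow> bool" where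
  "rho_pair l lams mus rho rho' \<longleftrightarrow>
     (\<exists>d d'. condJ1 l lams mus d d' rho rho') \<or> (\<exists>d. condJ2 l lams mus d rho rho')"

definition hH :: "nat list \<Rightarrow> nat list \<Rightarrow> int" where
  "hH lam mu = int (card (diagram lam - (diagram lam \<inter> diagram mu)))"

definition xrow :: "nat list \<Rightarrow> nat list \<Rightarrow> nat" where
  "xrow lam mu = fst (head (diagram lam - (diagram lam \<inter> diagram mu)))"

definition yrow :: "nat list \<Rightarrow> nat list \<Rightarrow> nat" where
  "yrow lam mu = fst (tail (diagram mu - (diagram lam \<inter> diagram mu)))"

definition betaI :: "int \<Rightarrow> nat list \<Rightarrow> nat \<Rightarrow> int" where
  "betaI s mu i = beta s mu ! (i - 1)"

definition gammaH :: "nat \<Rightarrow> nat \<Rightarrow> int \<Rightarrow> nat list \<Rightarrow> nat list \<Rightarrow> int" where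
  "gammaH n l s lam mu =
     (cc n l (betaI s mu (yrow lam mu)) - cc n l (betaI s mu (xrow lam mu))) mod (int n * int l)"

definition deltaH :: "nat \<Rightarrow> nat \<Rightarrow> int \<Rightarrow> nat list \<Rightarrow> nat list \<Rightarrow> int" where
  "deltaH n l s lam mu =
     (int n * (dd n l (betaI s mu (yrow lam mu)) - dd n l (betaI s mu (xrow lam mu)))) mod (int n * int l)"

definition neg1pow :: "int \<Rightarrow> int" where
  "neg1pow z = (if even z then 1 else -1)"

definition kappa :: "int list \<Rightarrow> nat" where
  "kappa a = card {(i, j). i < j \<and> j < length a \<and> a ! i = a ! j}"

text \<open>sigma.(k_1,...,k_r) = (k_{sigma^{-1}(1)},...), indices 0-based, sigma permutes {0..<r}.\<close>
definition perm_act :: "(nat \<Rightarrow> nat) \<Rightarrow> 'a list \<Rightarrow> 'a list" where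
  "perm_act \<sigma> a = map (\<lambda>i. a ! (inv \<sigma> i)) [0..<length a]"

definition coxeter_length :: "(nat \<Rightarrow> nat) \<Rightarrow> nat \<Rightarrow> nat" where
  "coxeter_length \<sigma> r = card {(i, j). i < j \<and> j < r \<and> \<sigma> j < \<sigma> i}"

text \<open>Length of v(a): the minimal length of sigma with a = sigma.b,
  b the weakly decreasing rearrangement of a.\<close>
definition v_length :: "int list \<Rightarrow> nat" where
  "v_length a = Min {coxeter_length \<sigma> (length a) | \<sigma>.
      \<sigma> permutes {..<length a} \<and> a = perm_act \<sigma> (rev (sort a))}"

definition eps_LM :: "nat \<Rightarrow> nat \<Rightarrow> int \<Rightarrow> nat list \<Rightarrow> nat list \<Rightarrow> int" where
  "eps_LM n l s lam mu =
     neg1pow (int (kappa (map (dd n l) (beta s mu)))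
              + int (v_length (map (dd n l) (rev (beta s mu))))
              + int (v_length (map (dd n l) (beta s lam))))"

section \<open>Straightening coefficients (Uglov)\<close>

text \<open>Contribution of one of the sums: over i \<ge> i0 such that
  (a,b) = (k2 - e - nli, k1 + e + nli) and the wedge is ordered (a > b).\<close>
definition sum_term :: "nat \<Rightarrow> nat \<Rightarrow> int \<Rightarrow> int \<Rightarrow> int \<Rightarrow> nat \<Rightarrow> (nat \<Rightarrow> real)
                          \<Rightarrow> int \<Rightarrow> int \<Rightarrow> real" where
  "sum_term n l k1 k2 e i0 f a b =
     (\<Sum>i\<in>{i. i0 \<le> i \<and> a = k2 - e - int n * int l * int i \<and>
                b = k1 + e + int n * int l * int i \<and> a > b}. f i)"

text \<open>Coefficient (evaluated at q) of v_a \<and> v_b in the straightening of v_k1 \<and> v_k2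
  (k1 \<le> k2) by the applicable rule (R1)-(R4).\<close>
definition straight_coeff :: "nat \<Rightarrow> nat \<Rightarrow> int \<Rightarrow> int \<Rightarrow> int \<Rightarrow> int \<Rightarrow> real \<Rightarrow> real" where
  "straight_coeff n l k1 k2 a b q =
    (let N = int n * int l;
         g = (cc n l k2 - cc n l k1) mod N;
         e = (int n * (dd n l k2 - dd n l k1)) mod N;
         main = (\<lambda>c. if (a, b) = (k2, k1) then c else 0);
         T = (\<lambda>sh i0 f. sum_term n l k1 k2 sh i0 f a b);
         D = q + inverse q
     in if g = 0 \<and> e = 0 then main (-1)
        else if e = 0 then
          main (- inverse q)
          - (q powi (-2) - 1) * T 0 1 (\<lambda>i. q powi (- 2 * int i + 1))
          + (q powi (-2) - 1) * T g 0 (\<lambda>i. q powi (- 2 * int i))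
        else if g = 0 then
          main (- q)
          - (q ^ 2 - 1) * T 0 1 (\<lambda>i. q powi (2 * int i - 1))
          + (q ^ 2 - 1) * T e 0 (\<lambda>i. q powi (2 * int i))
        else
          main (-1)
          - (q - inverse q) * T 0 1 (\<lambda>i. (q powi (2 * int i) - q powi (- 2 * int i)) / D)
          - (q - inverse q) * T g 0 (\<lambda>i. (q powi (2 * int i + 1) + q powi (- 2 * int i - 1)) / D)
          + (q - inverse q) * T e 0 (\<lambda>i. (q powi (2 * int i + 1) + q powi (- 2 * int i - 1)) / D)
          + (q - inverse q) * T (g + e) 0 (\<lambda>i. (q powi (2 * int i + 2) - q powi (- 2 * int i - 2)) / D))"

text \<open>Nonzero coefficient in C(q): the rational function is not identically zero,
  i.e. it is nonzero at some q > 0 (where all denominators are nonzero).\<close>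
definition nonzero_coeff :: "nat \<Rightarrow> nat \<Rightarrow> int \<Rightarrow> int \<Rightarrow> int \<Rightarrow> int \<Rightarrow> bool" where
  "nonzero_coeff n l k1 k2 a b \<longleftrightarrow> (\<exists>q::real. q > 0 \<and> straight_coeff n l k1 k2 a b q \<noteq> 0)"

text \<open>v_ks \<rightarrow> v_ls (0-based position i, i+1).\<close>
definition wstep :: "nat \<Rightarrow> nat \<Rightarrow> int list \<Rightarrow> int list \<Rightarrow> bool" where
  "wstep n l ks ls \<longleftrightarrow> length ls = length ks \<and>
     (\<exists>i. i + 1 < length ks \<and> ks ! i \<le> ks ! (i + 1) \<and>
          (\<forall>j<i. ks ! j > ks ! (j + 1)) \<and>
          (\<forall>j<length ks. j \<noteq> i \<and> j \<noteq> i + 1 \<longrightarrow> ls ! j = ks ! j) \<and>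
          nonzero_coeff n l (ks ! i) (ks ! (i + 1)) (ls ! i) (ls ! (i + 1)))"

text \<open>The m-value of a step (the position i is the first non-descent of ks).\<close>
definition step_m :: "int list \<Rightarrow> int list \<Rightarrow> nat" where
  "step_m ks ls = (let i = (LEAST i. ks ! i \<le> ks ! (i + 1)) in
     if (ls ! i, ls ! (i + 1)) = (ks ! (i + 1), ks ! i) then 0 else 1)"

text \<open>A good sequence [k_0, ..., k_N] for (lambda, mu); its length is N.\<close>
definition good_seq :: "nat \<Rightarrow> nat \<Rightarrow> int \<Rightarrow> nat list \<Rightarrow> nat list \<Rightarrow> int list list \<Rightarrow> bool" where
  "good_seq n l s lam mu kss \<longleftrightarrow> kss \<noteq> [] \<and>
     hd kss = rev (beta s mu) \<and> last kss = beta s lam \<and>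
     (\<forall>t. t + 1 < length kss \<longrightarrow> wstep n l (kss ! t) (kss ! (t + 1))) \<and>
     (\<Sum>t<length kss - 1. step_m (kss ! t) (kss ! (t + 1))) = 1"

end

theory Submission
  imports Defs
begin

text \<open>
  Encode wedges by their sets of indices, i.e. by beads on an abacus with \<open>l\<close> runners, the runner
  of \<open>k\<close> being \<open>d(k)\<close>. Along the good sequence every step but one swaps two adjacent entries and
  so lowers the number of ascending pairs by one. The remaining step straightens
  \<open>v\<^bsub>\<beta>\<^sub>x\<^esub> \<and> v\<^bsub>\<beta>\<^sub>y\<^esub>\<close> into \<open>v\<^bsub>\<beta>\<^sub>y - h\<^esub> \<and> v\<^bsub>\<beta>\<^sub>x + h\<^esub>\<close>, moving two beads towards each other by \<open>h\<close>;
  it changes the number of ascending pairs by \<open>-1\<close> plus the number of beads passed, modulo 2.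
  Since the sequence runs from an increasing to a decreasing list, \<open>N\<close> is congruent to the
  number of pairs plus the number of passed beads.

  On the other side, \<open>h \<equiv> \<gamma>\<close> keeps both moved beads on their runners, whereas \<open>h \<equiv> \<delta>\<close> with
  \<open>\<delta> > 0\<close> exchanges them. Either way \<open>\<rho>\<close> and \<open>\<rho>'\<close> live in the components of these runners, and
  \<open>ht(\<rho>) + ht(\<rho>')\<close> counts the beads of the same runner lying between a moved bead and its
  target. The inversions of the runner sequence, which govern \<open>\<epsilon>(\<lambda>, \<mu>)\<close>, change by the number
  of such beads on the other runners, plus one if the runners are exchanged; modulo 2 the two
  counts add up to the number of passed beads.
\<close>

section \<open>Beta-numbers of a partition\<close>

definition beta_num :: "int \<Rightarrow> nat list \<Rightarrow> nat \<Rightarrow> int" where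
  "beta_num c p i = int (partI p i) + c + 1 - int i"

definition beta_set :: "int \<Rightarrow> nat list \<Rightarrow> int set" where
  "beta_set c p = beta_num c p ` {1..}"

definition beads_ge :: "int \<Rightarrow> nat list \<Rightarrow> int \<Rightarrow> nat" where
  "beads_ge c p t = card {i. 1 \<le> i \<and> t \<le> beta_num c p i}"

lemma partI_antimono:
  assumes "is_partition p" "1 \<le> i" "i \<le> j"
  shows "partI p j \<le> partI p i"
proof (cases "j \<le> length p")
  case True
  then have "p ! (j - 1) \<le> p ! (i - 1)"
    using assms unfolding is_partition_def
    by (cases "i = j") (auto simp: sorted_wrt_iff_nth_less)
  then show ?thesis using True assms by (simp add: partI_def)
qed (simp add: partI_def)

lemma beta_num_strict_antimono:
  "is_partition p \<Longrightarrow> 1 \<le> i \<Longrightarrow> i < j \<Longrightarrow> beta_num c p j < beta_num c p i"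
  using partI_antimono[of p i j] by (simp add: beta_num_def)

lemma beta_num_antimono:
  "is_partition p \<Longrightarrow> 1 \<le> i \<Longrightarrow> i \<le> j \<Longrightarrow> beta_num c p j \<le> beta_num c p i"
  using partI_antimono[of p i j] by (simp add: beta_num_def)

lemma beta_num_beyond_length: "length p < i \<Longrightarrow> beta_num c p i = c + 1 - int i"
  by (simp add: beta_num_def partI_def)

lemma down_closed_eq_atLeastAtMost_card:
  fixes A :: "nat set"
  assumes "finite A" "\<forall>i\<in>A. 1 \<le> i" "\<And>i j. 1 \<le> i \<Longrightarrow> i \<le> j \<Longrightarrow> j \<in> A \<Longrightarrow> i \<in> A"
  shows "A = {1..card A}"
proof (cases "A = {}")
  case False
  have "A = {1..Max A}"
  proof
    show "A \<subseteq> {1..Max A}" using assms(1,2) by auto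
    show "{1..Max A} \<subseteq> A" using assms(3) Max_in[OF assms(1) False] by auto
  qed
  then show ?thesis by (metis card_atLeastAtMost diff_Suc_1)
qed simp

lemma finite_rows_beta_num_ge: "finite {i. 1 \<le> i \<and> t \<le> beta_num c p i}"
proof (rule finite_subset)
  show "{i. 1 \<le> i \<and> t \<le> beta_num c p i} \<subseteq> {..max (length p) (nat (c + 1 - t))}"
  proof clarify
    fix i assume "1 \<le> i" "t \<le> beta_num c p i"
    then show "i \<le> max (length p) (nat (c + 1 - t))"
      using beta_num_beyond_length[of p i c] by (cases "length p < i") auto
  qed
qed simp

lemma rows_beta_num_ge:
  assumes "is_partition p"
  shows "{i. 1 \<le> i \<and> t \<le> beta_num c p i} = {1..beads_ge c p t}"
  unfolding beads_ge_def
proof (rule down_closed_eq_atLeastAtMost_card[OF finite_rows_beta_num_ge])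
  fix i j :: nat assume "1 \<le> i" "i \<le> j" "j \<in> {i. 1 \<le> i \<and> t \<le> beta_num c p i}"
  then show "i \<in> {i. 1 \<le> i \<and> t \<le> beta_num c p i}"
    using beta_num_antimono[OF assms, of i j c] by auto
qed auto

lemma le_beta_num_iff:
  "is_partition p \<Longrightarrow> 1 \<le> i \<Longrightarrow> t \<le> beta_num c p i \<longleftrightarrow> i \<le> beads_ge c p t"
  using rows_beta_num_ge[of p t c] by (auto simp: set_eq_iff)

lemma beads_ge_beta_num: "is_partition p \<Longrightarrow> 1 \<le> i \<Longrightarrow> beads_ge c p (beta_num c p i) = i"
  using le_beta_num_iff[of p i "beta_num c p i" c] le_beta_num_iff[of p "Suc i" "beta_num c p i" c]
    beta_num_strict_antimono[of p i "Suc i" c] by auto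

lemma inj_on_beta_num: "is_partition p \<Longrightarrow> inj_on (beta_num c p) {1..}"
  by (rule inj_onI) (metis atLeast_iff beads_ge_beta_num)

lemma beads_ge_eq_card:
  assumes "is_partition p"
  shows "beads_ge c p t = card {x \<in> beta_set c p. t \<le> x}"
proof -
  have "{x \<in> beta_set c p. t \<le> x} = beta_num c p ` {i. 1 \<le> i \<and> t \<le> beta_num c p i}"
    unfolding beta_set_def by auto
  moreover have "inj_on (beta_num c p) {i. 1 \<le> i \<and> t \<le> beta_num c p i}"
    using inj_on_beta_num[OF assms] by (rule inj_on_subset) auto
  ultimately show ?thesis unfolding beads_ge_def by (simp add: card_image)
qed

lemma finite_beta_set_ge: "finite {x \<in> beta_set c p. t \<le> x}"
proof -
  have "{x \<in> beta_set c p. t \<le> x} = beta_num c p ` {i. 1 \<le> i \<and> t \<le> beta_num c p i}"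
    unfolding beta_set_def by auto
  then show ?thesis using finite_rows_beta_num_ge by simp
qed

lemma diagram_eq_if_beads_ge_eq:
  assumes f: "is_partition f" and g: "is_partition g" and eq: "\<And>t. beads_ge c f t = beads_ge c g t"
  shows "diagram f = diagram g"
proof -
  have "partI f i = partI g i" if "1 \<le> i" for i
  proof -
    have "\<forall>t. t \<le> beta_num c f i \<longleftrightarrow> t \<le> beta_num c g i"
      using le_beta_num_iff[OF f that] le_beta_num_iff[OF g that] eq by simp
    then have "beta_num c f i = beta_num c g i" by (meson order_antisym order_refl)
    then show ?thesis unfolding beta_num_def by simp
  qed
  then show ?thesis unfolding diagram_def by auto
qed

lemma beads_ge_mono_diagram:
  assumes f: "is_partition f" and g: "is_partition g" and sub: "diagram f \<subseteq> diagram g"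
  shows "beads_ge c f t \<le> beads_ge c g t"
proof -
  have "partI f i \<le> partI g i" if i: "1 \<le> i" for i
  proof (rule ccontr)
    assume "\<not> partI f i \<le> partI g i"
    then have "(i, partI f i) \<in> diagram f" "(i, partI f i) \<notin> diagram g"
      using i unfolding diagram_def by auto
    then show False using sub by auto
  qed
  then have "{i. 1 \<le> i \<and> t \<le> beta_num c f i} \<subseteq> {i. 1 \<le> i \<and> t \<le> beta_num c g i}"
    unfolding beta_num_def by force
  then show ?thesis unfolding beads_ge_def by (intro card_mono finite_rows_beta_num_ge)
qed

lemma mem_diagram_diff_iff:
  assumes "is_partition f" "is_partition g"
  shows "(i, j) \<in> diagram g - diagram f \<longleftrightarrow>
     1 \<le> i \<and> beads_ge c f (int j + c + 1 - int i) < i \<and> i \<le> beads_ge c g (int j + c + 1 - int i)"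
proof -
  have row: "1 \<le> i \<Longrightarrow> j \<le> partI q i \<longleftrightarrow> i \<le> beads_ge c q (int j + c + 1 - int i)"
    if "is_partition q" for q
    using le_beta_num_iff[OF that, of i "int j + c + 1 - int i" c] by (auto simp: beta_num_def)
  show ?thesis unfolding diagram_def using row[OF assms(1)] row[OF assms(2)] by auto
qed

lemma length_beta: "length (beta s p) = sum_list p"
  by (simp add: beta_def del: upt.simps)

lemma beta_nth: "k < sum_list p \<Longrightarrow> beta s p ! k = beta_num s p (Suc k)"
  by (simp add: beta_def beta_num_def nth_upt del: upt.simps)

lemma Bset_eq_image: "Bset s p = beta_num s p ` {1..sum_list p}"
proof -
  have "set [1..<sum_list p + 1] = {1..sum_list p}" by auto
  then show ?thesis unfolding Bset_def beta_def beta_num_def by (simp add: image_def)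
qed

lemma beta_strict_desc: "is_partition p \<Longrightarrow> sorted_wrt (>) (beta s p)"
  unfolding sorted_wrt_iff_nth_less length_beta
  by (auto simp: beta_nth intro!: beta_num_strict_antimono)

lemma betaI_eq_beta_num: "1 \<le> i \<Longrightarrow> i \<le> sum_list p \<Longrightarrow> betaI s p i = beta_num s p i"
  unfolding betaI_def using beta_nth[of "i - 1" p s] by simp

lemma head_tail_card_image_interval:
  fixes node :: "int \<Rightarrow> nat \<times> nat"
  assumes S: "S = node ` {p<..p'}" and pp: "p < p'"
    and cont: "\<And>t. p < t \<Longrightarrow> t \<le> p' \<Longrightarrow> content (node t) = t - e"
  shows "head S = node (p + 1)" and "tail S = node p'" and "card S = nat (p' - p)"
proof -
  have in_S: "\<exists>t. p < t \<and> t \<le> p' \<and> q = node t \<and> content q = t - e" if "q \<in> S" for q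
    using that cont unfolding S by auto
  have "inj_on node {p<..p'}"
  proof (rule inj_onI)
    fix t t' assume t: "t \<in> {p<..p'}" "t' \<in> {p<..p'}" and eq: "node t = node t'"
    have "content (node t) = content (node t')" using eq by (rule arg_cong)
    moreover have "content (node t) = t - e" "content (node t') = t' - e" using cont t by auto
    ultimately show "t = t'" by linarith
  qed
  then show "card S = nat (p' - p)" unfolding S by (simp add: card_image)
  have first: "node (p + 1) \<in> S" "content (node (p + 1)) = p + 1 - e"
    and last: "node p' \<in> S" "content (node p') = p' - e"
    using pp cont[of "p + 1"] cont[of p'] unfolding S by auto
  show "head S = node (p + 1)"
    unfolding head_def
  proof (rule the_equality)
    have "content (node (p + 1)) \<le> content q" if "q \<in> S" for q
      using in_S[OF that] first(2) by auto
    then show "node (p + 1) \<in> S \<and> (\<forall>q\<in>S. content (node (p + 1)) \<le> content q)"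
      using first(1) by blast
    fix q assume q: "q \<in> S \<and> (\<forall>q'\<in>S. content q \<le> content q')"
    then obtain t where t: "p < t" "q = node t" "content q = t - e" using in_S by blast
    have "content q \<le> content (node (p + 1))" using q first(1) by blast
    then have "t = p + 1" using t first(2) by simp
    then show "q = node (p + 1)" using t by simp
  qed
  show "tail S = node p'"
    unfolding tail_def
  proof (rule the_equality)
    have "content q \<le> content (node p')" if "q \<in> S" for q
      using in_S[OF that] last(2) by auto
    then show "node p' \<in> S \<and> (\<forall>q\<in>S. content q \<le> content (node p'))"
      using last(1) by blast
    fix q assume q: "q \<in> S \<and> (\<forall>q'\<in>S. content q' \<le> content q)"
    then obtain t where t: "t \<le> p'" "q = node t" "content q = t - e" using in_S by blast
    have "content (node p') \<le> content q" using q last(1) by blast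
    then have "t = p'" using t last(2) by simp
    then show "q = node p'" using t by simp
  qed
qed

lemma diagram_diff_eq_image:
  assumes f: "is_partition f" and g: "is_partition g"
    and counts: "\<And>t. int (beads_ge c g t) = int (beads_ge c f t) + of_bool (p < t \<and> t \<le> p') - of_bool (E t)"
    and E: "\<And>t. p < t \<Longrightarrow> t \<le> p' \<Longrightarrow> \<not> E t"
  defines "node \<equiv> \<lambda>t. (beads_ge c g t, nat (t - c - 1 + int (beads_ge c g t)))"
  shows "diagram g - diagram f = node ` {p<..p'}"
    and "\<And>t. p < t \<Longrightarrow> t \<le> p' \<Longrightarrow> content (node t) = t - (c + 1)"
proof -
  have less_iff: "beads_ge c f t < beads_ge c g t \<longleftrightarrow> p < t \<and> t \<le> p'" for t
    using counts[of t] E[of t] by (cases "p < t \<and> t \<le> p'"; cases "E t") auto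
  have col_pos: "0 < t - c - 1 + int (beads_ge c g t)" if "p < t" "t \<le> p'" for t
  proof -
    have "beads_ge c f t < beads_ge c g t" using less_iff that by auto
    then have "\<not> t \<le> beta_num c f (beads_ge c g t)" using le_beta_num_iff[OF f, of "beads_ge c g t" t c] by auto
    then show ?thesis by (simp add: beta_num_def)
  qed
  show "content (node t) = t - (c + 1)" if "p < t" "t \<le> p'" for t
    using col_pos[OF that] unfolding node_def content_def by simp
  show "diagram g - diagram f = node ` {p<..p'}"
  proof
    show "node ` {p<..p'} \<subseteq> diagram g - diagram f"
    proof
      fix q assume "q \<in> node ` {p<..p'}"
      then obtain t where t: "p < t" "t \<le> p'" and q: "q = node t" by auto
      have "int (nat (t - c - 1 + int (beads_ge c g t))) + c + 1 - int (beads_ge c g t) = t"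
        using col_pos[OF t] by simp
      then show "q \<in> diagram g - diagram f"
        using mem_diagram_diff_iff[OF f g, of "beads_ge c g t" "nat (t - c - 1 + int (beads_ge c g t))" c]
          less_iff[of t] t unfolding q node_def by simp
    qed
    show "diagram g - diagram f \<subseteq> node ` {p<..p'}"
    proof
      fix q assume q: "q \<in> diagram g - diagram f"
      obtain i j where ij: "q = (i, j)" by force
      define t where "t = int j + c + 1 - int i"
      have m: "1 \<le> i" "beads_ge c f t < i" "i \<le> beads_ge c g t"
        using q mem_diagram_diff_iff[OF f g, of i j c] unfolding ij t_def by auto
      then have t: "p < t" "t \<le> p'" using less_iff[of t] by auto
      then have "i = beads_ge c g t" using counts[of t] E[OF t] m by auto
      then have "q = node t" unfolding node_def ij t_def by auto
      then show "q \<in> node ` {p<..p'}" using t by auto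
    qed
  qed
qed

lemma head_tail_diagram_diff:
  assumes f: "is_partition f" and g: "is_partition g" and pp: "p < p'"
    and counts: "\<And>t. int (beads_ge c g t) = int (beads_ge c f t) + of_bool (p < t \<and> t \<le> p') - of_bool (E t)"
    and E: "\<And>t. p < t \<Longrightarrow> t \<le> p' \<Longrightarrow> \<not> E t"
  shows "fst (head (diagram g - diagram f)) = beads_ge c g (p + 1)"
    and "fst (tail (diagram g - diagram f)) = beads_ge c g p'"
    and "card (diagram g - diagram f) = nat (p' - p)"
  using head_tail_card_image_interval[OF diagram_diff_eq_image(1)[OF f g counts E] pp
      diagram_diff_eq_image(2)[OF f g counts E]]
  by simp_all

section \<open>Ascending pairs and minimal-length permutations\<close>

definition index_pairs :: "nat \<Rightarrow> (nat \<times> nat) set" where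
  "index_pairs r = {(i, j). i < j \<and> j < r}"

definition asc_pairs :: "'a::linorder list \<Rightarrow> nat" where
  "asc_pairs a = card {(i, j). i < j \<and> j < length a \<and> a ! i < a ! j}"

definition inversions_on :: "(int \<Rightarrow> int) \<Rightarrow> int set \<Rightarrow> nat" where
  "inversions_on d S = card {(x, y). x \<in> S \<and> y \<in> S \<and> y < x \<and> d x < d y}"

lemma finite_index_pairs_filter: "finite {(i, j). i < j \<and> j < (r::nat) \<and> P i j}"
  by (rule finite_subset[of _ "{..<r} \<times> {..<r}"]) auto

lemma distinct_if_sorted_wrt_greater: "sorted_wrt (>) (xs :: 'a::linorder list) \<Longrightarrow> distinct xs"
  by (induction xs) auto

lemma perm_act_nth: "i < length b \<Longrightarrow> perm_act \<sigma> b ! i = b ! (inv \<sigma> i)"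
  by (simp add: perm_act_def)

lemma asc_pairs_le_coxeter_length:
  fixes a :: "'a::linorder list"
  assumes sp: "\<sigma> permutes {..<length a}" and ae: "a = perm_act \<sigma> (rev (sort a))"
  shows "asc_pairs a \<le> coxeter_length \<sigma> (length a)"
proof -
  define r where "r = length a"
  define b where "b = rev (sort a)"
  have lb: "length b = r" by (simp add: b_def r_def)
  have an: "a ! i = b ! (inv \<sigma> i)" if "i < r" for i
    using perm_act_nth[of i b \<sigma>] that lb ae b_def by metis
  have "sorted_wrt (\<ge>) b" unfolding b_def by (simp add: sorted_wrt_rev)
  then have bs: "b ! y \<le> b ! x" if "x < y" "y < r" for x y
    using that lb unfolding sorted_wrt_iff_nth_less by auto
  have isp: "inv \<sigma> permutes {..<r}" using permutes_inv[OF sp] r_def by simp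
  have inr: "inv \<sigma> i < r" if "i < r" for i
    using permutes_in_image[OF isp] that by auto
  define f where "f = (\<lambda>(i::nat, j::nat). (inv \<sigma> j, inv \<sigma> i))"
  have inj: "inj_on f {(i, j). i < j \<and> j < length a \<and> a ! i < a ! j}"
    unfolding f_def inj_on_def using permutes_inj[OF isp] by (auto dest: injD)
  have sub: "f ` {(i, j). i < j \<and> j < length a \<and> a ! i < a ! j}
      \<subseteq> {(i, j). i < j \<and> j < length a \<and> \<sigma> j < \<sigma> i}"
  proof
    fix q assume "q \<in> f ` {(i, j). i < j \<and> j < length a \<and> a ! i < a ! j}"
    then obtain i j where ij: "i < j" "j < r" "a ! i < a ! j" "q = (inv \<sigma> j, inv \<sigma> i)"
      unfolding f_def r_def by auto
    have "inv \<sigma> i \<noteq> inv \<sigma> j" using ij(1) inj_eq[OF permutes_inj[OF isp]] by simp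
    moreover have "\<not> inv \<sigma> i < inv \<sigma> j"
      using bs[of "inv \<sigma> i" "inv \<sigma> j"] inr[OF ij(2)] an[of i] an[OF ij(2)] ij by fastforce
    ultimately show "q \<in> {(i, j). i < j \<and> j < length a \<and> \<sigma> j < \<sigma> i}"
      using inr[of i] ij permutes_inverses(1)[OF sp, of i] permutes_inverses(1)[OF sp, of j]
      unfolding r_def by auto
  qed
  show ?thesis
    unfolding asc_pairs_def coxeter_length_def
    by (rule card_inj_on_le[OF inj sub finite_index_pairs_filter])
qed

text \<open>The permutation realising the bound below sends position \<open>i\<close> to the rank of \<open>a ! i\<close>
  in the stable weakly decreasing sort of \<open>a\<close>.\<close>

definition sorts_before :: "'a::linorder list \<Rightarrow> nat \<Rightarrow> nat \<Rightarrow> bool" where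
  "sorts_before a j i \<longleftrightarrow> a ! i < a ! j \<or> (a ! j = a ! i \<and> j < i)"

definition stable_rank :: "'a::linorder list \<Rightarrow> nat \<Rightarrow> nat" where
  "stable_rank a i = card {j. j < length a \<and> sorts_before a j i}"

lemma stable_rank_less_length: "i < length a \<Longrightarrow> stable_rank a i < length a"
proof -
  assume i: "i < length a"
  have "{j. j < length a \<and> sorts_before a j i} \<subseteq> {..<length a} - {i}"
    unfolding sorts_before_def by auto
  then have "stable_rank a i \<le> card ({..<length a} - {i})"
    unfolding stable_rank_def by (intro card_mono) auto
  then show ?thesis using i by simp
qed

lemma stable_rank_less_iff:
  assumes "i < length a" "j < length a"
  shows "stable_rank a j < stable_rank a i \<longleftrightarrow> sorts_before a j i"
proof -
  have mono: "stable_rank a y < stable_rank a x"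
    if "x < length a" "y < length a" "sorts_before a y x" for x y
  proof -
    have "{z. z < length a \<and> sorts_before a z y} \<subset> {z. z < length a \<and> sorts_before a z x}"
      using that unfolding sorts_before_def by auto
    then show ?thesis unfolding stable_rank_def by (intro psubset_card_mono) auto
  qed
  show ?thesis
  proof
    show "sorts_before a j i" if "stable_rank a j < stable_rank a i"
    proof (rule ccontr)
      assume "\<not> sorts_before a j i"
      then have "i = j \<or> sorts_before a i j" unfolding sorts_before_def by auto
      then show False using mono[of j i] assms that by auto
    qed
  qed (rule mono[OF assms])
qed

definition stable_rank_perm :: "'a::linorder list \<Rightarrow> nat \<Rightarrow> nat" where
  "stable_rank_perm a x = (if x < length a then stable_rank a x else x)"

lemma stable_rank_perm_permutes: "stable_rank_perm a permutes {..<length a}"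
proof -
  have inj: "inj_on (stable_rank_perm a) {..<length a}"
  proof (rule inj_onI)
    fix x y assume xy: "x \<in> {..<length a}" "y \<in> {..<length a}" "stable_rank_perm a x = stable_rank_perm a y"
    show "x = y"
    proof (rule ccontr)
      assume "x \<noteq> y"
      then have "sorts_before a x y \<or> sorts_before a y x" unfolding sorts_before_def by auto
      then show False using xy stable_rank_less_iff[of x a y] stable_rank_less_iff[of y a x]
        unfolding stable_rank_perm_def by auto
    qed
  qed
  have img: "stable_rank_perm a ` {..<length a} \<subseteq> {..<length a}"
    unfolding stable_rank_perm_def using stable_rank_less_length by auto
  then have "bij_betw (stable_rank_perm a) {..<length a} {..<length a}"
    using endo_inj_surj[OF _ img inj] inj by (simp add: bij_betw_def)
  then show ?thesis by (rule bij_imp_permutes) (simp add: stable_rank_perm_def)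
qed

lemma stable_rank_inv_stable_rank_perm:
  "k < length a \<Longrightarrow> stable_rank a (inv (stable_rank_perm a) k) = k \<and> inv (stable_rank_perm a) k < length a"
  using permutes_inverses(1)[OF stable_rank_perm_permutes[of a], of k]
    permutes_in_image[OF permutes_inv[OF stable_rank_perm_permutes[of a]], of k]
  unfolding stable_rank_perm_def by (auto split: if_splits)

lemma perm_act_inv_stable_rank_perm: "perm_act (inv (stable_rank_perm a)) (rev (sort a)) = a"
proof -
  define \<sigma> where "\<sigma> = inv (stable_rank_perm a)"
  have sp: "\<sigma> permutes {..<length a}" unfolding \<sigma>_def by (rule permutes_inv[OF stable_rank_perm_permutes])
  define b where "b = permute_list \<sigma> a"
  have bn: "b ! k = a ! (\<sigma> k)" if "k < length a" for k
    using permute_list_nth[of \<sigma> a k] sp that unfolding b_def by simp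
  have "sorted_wrt (\<ge>) b"
    unfolding sorted_wrt_iff_nth_less
  proof (intro allI impI)
    fix k k' assume kk: "k < k'" "k' < length b"
    then have "\<not> sorts_before a (\<sigma> k') (\<sigma> k)"
      using stable_rank_less_iff[of "\<sigma> k" a "\<sigma> k'"] stable_rank_inv_stable_rank_perm[of k a]
        stable_rank_inv_stable_rank_perm[of k' a] unfolding b_def \<sigma>_def by auto
    then show "b ! k' \<le> b ! k" using bn kk unfolding sorts_before_def b_def by auto
  qed
  then have "sort a = rev b"
    using properties_for_sort[of "rev b" a] sp unfolding b_def by (simp add: sorted_wrt_rev)
  then have rb: "rev (sort a) = b" by simp
  have inv: "\<sigma> (inv \<sigma> i) = i" "inv \<sigma> i < length a" if "i < length a" for i
    using permutes_inverses(1)[OF sp] permutes_in_image[OF permutes_inv[OF sp]] that by auto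
  show ?thesis unfolding \<sigma>_def[symmetric] rb
  proof (rule nth_equalityI)
    show "length (perm_act \<sigma> b) = length a" by (simp add: perm_act_def b_def)
    fix i assume "i < length (perm_act \<sigma> b)"
    then have i: "i < length a" by (simp add: perm_act_def b_def)
    then show "perm_act \<sigma> b ! i = a ! i"
      using perm_act_nth[of i b \<sigma>] bn[OF inv(2)[OF i]] inv(1)[OF i] by (simp add: b_def)
  qed
qed

lemma coxeter_length_inv_stable_rank_perm:
  "coxeter_length (inv (stable_rank_perm a)) (length a) \<le> asc_pairs a"
proof -
  define \<sigma> where "\<sigma> = inv (stable_rank_perm a)"
  have sp: "\<sigma> permutes {..<length a}" unfolding \<sigma>_def by (rule permutes_inv[OF stable_rank_perm_permutes])
  define f where "f = (\<lambda>(x::nat, y::nat). (\<sigma> y, \<sigma> x))"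
  have "inj_on f {(i, j). i < j \<and> j < length a \<and> \<sigma> j < \<sigma> i}"
    unfolding f_def inj_on_def using permutes_inj[OF sp] by (auto dest: injD)
  moreover have "f ` {(i, j). i < j \<and> j < length a \<and> \<sigma> j < \<sigma> i}
      \<subseteq> {(i, j). i < j \<and> j < length a \<and> a ! i < a ! j}"
  proof
    fix q assume "q \<in> f ` {(i, j). i < j \<and> j < length a \<and> \<sigma> j < \<sigma> i}"
    then obtain x y where xy: "x < y" "y < length a" "\<sigma> y < \<sigma> x" "q = (\<sigma> y, \<sigma> x)"
      unfolding f_def by auto
    then have "sorts_before a (\<sigma> x) (\<sigma> y)" "\<sigma> x < length a"
      using stable_rank_less_iff[of "\<sigma> y" a "\<sigma> x"] stable_rank_inv_stable_rank_perm[of x a]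
        stable_rank_inv_stable_rank_perm[of y a] unfolding \<sigma>_def by auto
    then show "q \<in> {(i, j). i < j \<and> j < length a \<and> a ! i < a ! j}"
      using xy unfolding sorts_before_def by auto
  qed
  ultimately show ?thesis
    unfolding asc_pairs_def coxeter_length_def \<sigma>_def[symmetric]
    by (rule card_inj_on_le[OF _ _ finite_index_pairs_filter])
qed

lemma v_length_eq_asc_pairs: "v_length a = asc_pairs a"
proof -
  define S where "S = {coxeter_length \<sigma> (length a) | \<sigma>.
      \<sigma> permutes {..<length a} \<and> a = perm_act \<sigma> (rev (sort a))}"
  define \<sigma> where "\<sigma> = inv (stable_rank_perm a)"
  have sp: "\<sigma> permutes {..<length a}" unfolding \<sigma>_def by (rule permutes_inv[OF stable_rank_perm_permutes])
  have act: "a = perm_act \<sigma> (rev (sort a))" unfolding \<sigma>_def by (simp add: perm_act_inv_stable_rank_perm)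
  have "coxeter_length \<sigma> (length a) = asc_pairs a"
    by (rule antisym[OF coxeter_length_inv_stable_rank_perm[of a, folded \<sigma>_def]
          asc_pairs_le_coxeter_length[OF sp act]])
  then have "asc_pairs a \<in> S"
    unfolding S_def mem_Collect_eq by (intro exI[of _ \<sigma>]) (use sp act in simp)
  moreover have "\<forall>x\<in>S. asc_pairs a \<le> x" unfolding S_def using asc_pairs_le_coxeter_length by auto
  moreover have "finite S"
  proof (rule finite_subset)
    show "S \<subseteq> {..card ({..<length a} \<times> {..<length a})}"
    proof
      fix x assume "x \<in> S"
      then obtain \<tau> where "x = coxeter_length \<tau> (length a)" unfolding S_def by auto
      moreover have "coxeter_length \<tau> (length a) \<le> card ({..<length a} \<times> {..<length a})"
        unfolding coxeter_length_def by (rule card_mono) auto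
      ultimately show "x \<in> {..card ({..<length a} \<times> {..<length a})}" by simp
    qed
  qed simp
  ultimately show ?thesis unfolding v_length_def S_def[symmetric] by (meson Min_eqI)
qed

lemma asc_pairs_rev: "asc_pairs (rev a) = card {(i, j). i < j \<and> j < length a \<and> a ! j < a ! i}"
proof -
  define r where "r = length a"
  define f where "f = (\<lambda>(i::nat, j::nat). (r - 1 - j, r - 1 - i))"
  have img: "f ` {(i, j). i < j \<and> j < r \<and> rev a ! i < rev a ! j} = {(i, j). i < j \<and> j < r \<and> a ! j < a ! i}"
  proof
    show "f ` {(i, j). i < j \<and> j < r \<and> rev a ! i < rev a ! j} \<subseteq> {(i, j). i < j \<and> j < r \<and> a ! j < a ! i}"
      unfolding f_def r_def by (auto simp: rev_nth)
    show "{(i, j). i < j \<and> j < r \<and> a ! j < a ! i} \<subseteq> f ` {(i, j). i < j \<and> j < r \<and> rev a ! i < rev a ! j}"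
    proof clarify
      fix i j assume q: "i < j" "j < r" "a ! j < a ! i"
      have "(r - 1 - j, r - 1 - i) \<in> {(i, j). i < j \<and> j < r \<and> rev a ! i < rev a ! j}"
        using q r_def by (auto simp: rev_nth Suc_diff_Suc)
      moreover have "f (r - 1 - j, r - 1 - i) = (i, j)" using q unfolding f_def by auto
      ultimately show "(i, j) \<in> f ` {(i, j). i < j \<and> j < r \<and> rev a ! i < rev a ! j}" by force
    qed
  qed
  have "inj_on f {(i, j). i < j \<and> j < r \<and> rev a ! i < rev a ! j}"
    unfolding f_def inj_on_def by auto
  then have "card (f ` {(i, j). i < j \<and> j < r \<and> rev a ! i < rev a ! j})
      = card {(i, j). i < j \<and> j < r \<and> rev a ! i < rev a ! j}" by (rule card_image)
  then show ?thesis unfolding asc_pairs_def r_def img[unfolded r_def] by simp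
qed

lemma kappa_add_asc_pairs:
  "kappa a + asc_pairs (rev a) + asc_pairs a = card (index_pairs (length a))"
proof -
  define A where "A = {(i, j). i < j \<and> j < length a \<and> a ! i = a ! j}"
  define B where "B = {(i, j). i < j \<and> j < length a \<and> a ! j < a ! i}"
  define C where "C = {(i, j). i < j \<and> j < length a \<and> a ! i < a ! j}"
  have fin: "finite A" "finite B" "finite C"
    unfolding A_def B_def C_def using finite_index_pairs_filter by auto
  have "index_pairs (length a) = A \<union> B \<union> C"
    unfolding index_pairs_def A_def B_def C_def by auto
  moreover have "card (A \<union> B) = card A + card B"
    using fin by (intro card_Un_disjoint) (auto simp: A_def B_def)
  moreover have "card (A \<union> B \<union> C) = card (A \<union> B) + card C"
    using fin by (intro card_Un_disjoint) (auto simp: A_def B_def C_def)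
  ultimately have "card (index_pairs (length a)) = card A + card B + card C" by simp
  then show ?thesis unfolding kappa_def asc_pairs_rev unfolding asc_pairs_def A_def B_def C_def by simp
qed

lemma asc_pairs_map_strict_desc:
  fixes xs :: "int list"
  assumes "sorted_wrt (>) xs"
  shows "asc_pairs (map f xs) = inversions_on f (set xs)"
proof -
  define g where "g = (\<lambda>(i, j). (xs ! i, xs ! j))"
  have less: "xs ! j < xs ! i" if "i < j" "j < length xs" for i j
    using assms that unfolding sorted_wrt_iff_nth_less by auto
  have inj_nth: "i = i'" if "i < length xs" "i' < length xs" "xs ! i = xs ! i'" for i i'
    using less[of i i'] less[of i' i] that by (cases i i' rule: linorder_cases) auto
  have img: "g ` {(i, j). i < j \<and> j < length xs \<and> map f xs ! i < map f xs ! j}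
       = {(x, y). x \<in> set xs \<and> y \<in> set xs \<and> y < x \<and> f x < f y}"
  proof
    show "g ` {(i, j). i < j \<and> j < length xs \<and> map f xs ! i < map f xs ! j}
       \<subseteq> {(x, y). x \<in> set xs \<and> y \<in> set xs \<and> y < x \<and> f x < f y}"
      unfolding g_def using less by auto
    show "{(x, y). x \<in> set xs \<and> y \<in> set xs \<and> y < x \<and> f x < f y}
       \<subseteq> g ` {(i, j). i < j \<and> j < length xs \<and> map f xs ! i < map f xs ! j}"
    proof clarify
      fix x y assume q: "x \<in> set xs" "y \<in> set xs" "y < x" "f x < f y"
      then obtain i j where ij: "i < length xs" "j < length xs" "x = xs ! i" "y = xs ! j"
        by (auto simp: in_set_conv_nth)
      then have "i < j" using less[of j i] q(3) by (cases i j rule: linorder_cases) auto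
      then show "(x, y) \<in> g ` {(i, j). i < j \<and> j < length xs \<and> map f xs ! i < map f xs ! j}"
        using ij q unfolding g_def by force
    qed
  qed
  have "inj_on g {(i, j). i < j \<and> j < length xs \<and> map f xs ! i < map f xs ! j}"
    unfolding g_def inj_on_def using inj_nth by auto
  then have "card (g ` {(i, j). i < j \<and> j < length xs \<and> map f xs ! i < map f xs ! j})
      = card {(i, j). i < j \<and> j < length xs \<and> map f xs ! i < map f xs ! j}" by (rule card_image)
  then show ?thesis unfolding asc_pairs_def inversions_on_def img by simp
qed

lemma asc_pairs_strict_asc: "sorted_wrt (<) xs \<Longrightarrow> asc_pairs xs = card (index_pairs (length xs))"
  unfolding asc_pairs_def index_pairs_def sorted_wrt_iff_nth_less by (rule arg_cong[where f=card]) auto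

lemma asc_pairs_strict_desc: "sorted_wrt (>) xs \<Longrightarrow> asc_pairs xs = 0"
proof -
  assume "sorted_wrt (>) xs"
  then have "{(i, j). i < j \<and> j < length xs \<and> xs ! i < xs ! j} = {}"
    unfolding sorted_wrt_iff_nth_less by (auto dest: less_asym)
  then show ?thesis unfolding asc_pairs_def by (simp only: card.empty)
qed


lemma eps_LM_eq_inversions:
  assumes lam: "is_partition lam" and mu: "is_partition mu"
  shows "eps_LM n l s lam mu = neg1pow (int (card (index_pairs (sum_list mu)))
     - int (inversions_on (dd n l) (Bset s mu)) + int (inversions_on (dd n l) (Bset s lam)))"
proof -
  have asc_inv: "asc_pairs (map (dd n l) (beta s p)) = inversions_on (dd n l) (Bset s p)"
    if "is_partition p" for p
    unfolding Bset_def by (rule asc_pairs_map_strict_desc[OF beta_strict_desc[OF that]])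
  have "int (kappa (map (dd n l) (beta s mu))) + int (asc_pairs (rev (map (dd n l) (beta s mu))))
      + int (asc_pairs (map (dd n l) (beta s mu))) = int (card (index_pairs (sum_list mu)))"
    using arg_cong[where f = int, OF kappa_add_asc_pairs[of "map (dd n l) (beta s mu)"]]
    by (simp add: length_beta)
  then have "int (kappa (map (dd n l) (beta s mu))) + int (asc_pairs (rev (map (dd n l) (beta s mu))))
      + int (asc_pairs (map (dd n l) (beta s lam))) = int (card (index_pairs (sum_list mu)))
      - int (inversions_on (dd n l) (Bset s mu)) + int (inversions_on (dd n l) (Bset s lam))"
    using asc_inv[OF lam] asc_inv[OF mu] by linarith
  then show ?thesis unfolding eps_LM_def v_length_eq_asc_pairs rev_map[symmetric] by simp
qed

section \<open>Ascending pairs under a change of two adjacent entries\<close>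

definition asc_ind :: "int list \<Rightarrow> nat \<times> nat \<Rightarrow> int" where
  "asc_ind zs p = of_bool (zs ! fst p < zs ! snd p)"

definition asc_ind_change :: "int list \<Rightarrow> int list \<Rightarrow> nat \<Rightarrow> nat \<Rightarrow> int" where
  "asc_ind_change xs ys i j = (if j < i then
      (asc_ind ys (j, i) - asc_ind xs (j, i)) + (asc_ind ys (j, Suc i) - asc_ind xs (j, Suc i))
    else (asc_ind ys (i, j) - asc_ind xs (i, j)) + (asc_ind ys (Suc i, j) - asc_ind xs (Suc i, j)))"

lemma asc_pairs_eq_sum: "int (asc_pairs zs) = (\<Sum>p\<in>index_pairs (length zs). asc_ind zs p)"
proof -
  have "index_pairs (length zs) \<inter> {p. zs ! fst p < zs ! snd p}
      = {(i, j). i < j \<and> j < length zs \<and> zs ! i < zs ! j}" unfolding index_pairs_def by auto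
  then show ?thesis unfolding asc_pairs_def asc_ind_def index_pairs_def
    using finite_index_pairs_filter[of "length zs" "\<lambda>_ _. True"] by simp
qed

lemma index_pairs_meeting_adjacent:
  assumes i: "Suc i < r"
  shows "index_pairs r \<inter> {p. fst p \<in> {i, Suc i} \<or> snd p \<in> {i, Suc i}} =
    insert (i, Suc i) ((\<lambda>j. (j, i)) ` {..<i} \<union> (\<lambda>j. (j, Suc i)) ` {..<i}
      \<union> (\<lambda>j. (i, j)) ` {Suc (Suc i)..<r} \<union> (\<lambda>j. (Suc i, j)) ` {Suc (Suc i)..<r})"
proof
  show "index_pairs r \<inter> {p. fst p \<in> {i, Suc i} \<or> snd p \<in> {i, Suc i}} \<subseteq> insert (i, Suc i)
      ((\<lambda>j. (j, i)) ` {..<i} \<union> (\<lambda>j. (j, Suc i)) ` {..<i}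
       \<union> (\<lambda>j. (i, j)) ` {Suc (Suc i)..<r} \<union> (\<lambda>j. (Suc i, j)) ` {Suc (Suc i)..<r})"
  proof
    fix p assume "p \<in> index_pairs r \<inter> {p. fst p \<in> {i, Suc i} \<or> snd p \<in> {i, Suc i}}"
    then obtain x y where p: "p = (x, y)" "x < y" "y < r" "x \<in> {i, Suc i} \<or> y \<in> {i, Suc i}"
      unfolding index_pairs_def by auto
    then consider "x = i" "y = Suc i" | "y = i" | "y = Suc i" "x < i" | "x = i" "Suc (Suc i) \<le> y"
      | "x = Suc i" by fastforce
    then show "p \<in> insert (i, Suc i) ((\<lambda>j. (j, i)) ` {..<i} \<union> (\<lambda>j. (j, Suc i)) ` {..<i}
       \<union> (\<lambda>j. (i, j)) ` {Suc (Suc i)..<r} \<union> (\<lambda>j. (Suc i, j)) ` {Suc (Suc i)..<r})"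
      by cases (use p in auto)
  qed
qed (use i in \<open>auto simp: index_pairs_def\<close>)

lemma sum_index_pairs_adjacent:
  fixes f :: "nat \<times> nat \<Rightarrow> int"
  assumes i: "Suc i < r"
    and zero: "\<And>x y. x < y \<Longrightarrow> y < r \<Longrightarrow> x \<notin> {i, Suc i} \<Longrightarrow> y \<notin> {i, Suc i} \<Longrightarrow> f (x, y) = 0"
  shows "(\<Sum>p\<in>index_pairs r. f p) = f (i, Suc i) + (\<Sum>j\<in>{..<r} - {i, Suc i}.
     if j < i then f (j, i) + f (j, Suc i) else f (i, j) + f (Suc i, j))"
proof -
  define J1 where "J1 = {..<i}"
  define J2 where "J2 = {Suc (Suc i)..<r}"
  have "(\<Sum>p\<in>index_pairs r. f p) = (\<Sum>p\<in>index_pairs r \<inter> {p. fst p \<in> {i, Suc i} \<or> snd p \<in> {i, Suc i}}. f p)"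
  proof (rule sum.mono_neutral_right)
    show "finite (index_pairs r)"
      unfolding index_pairs_def using finite_index_pairs_filter[of r "\<lambda>_ _. True"] by simp
    show "\<forall>p\<in>index_pairs r - (index_pairs r \<inter> {p. fst p \<in> {i, Suc i} \<or> snd p \<in> {i, Suc i}}). f p = 0"
    proof
      fix p assume "p \<in> index_pairs r - (index_pairs r \<inter> {p. fst p \<in> {i, Suc i} \<or> snd p \<in> {i, Suc i}})"
      then obtain x y where "p = (x, y)" "x < y" "y < r" "x \<notin> {i, Suc i}" "y \<notin> {i, Suc i}"
        unfolding index_pairs_def by auto
      then show "f p = 0" using zero by blast
    qed
  qed auto
  also have "\<dots> = f (i, Suc i) + ((\<Sum>j\<in>J1. f (j, i)) + (\<Sum>j\<in>J1. f (j, Suc i))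
      + (\<Sum>j\<in>J2. f (i, j)) + (\<Sum>j\<in>J2. f (Suc i, j)))"
  proof -
    define A1 where "A1 = (\<lambda>j. (j, i)) ` J1"
    define A2 where "A2 = (\<lambda>j. (j, Suc i)) ` J1"
    define A3 where "A3 = (\<lambda>j. (i, j)) ` J2"
    define A4 where "A4 = (\<lambda>j. (Suc i, j)) ` J2"
    have fin: "finite A1" "finite A2" "finite A3" "finite A4"
      unfolding A1_def A2_def A3_def A4_def J1_def J2_def by auto
    have "(\<Sum>p\<in>insert (i, Suc i) (A1 \<union> A2 \<union> A3 \<union> A4). f p) = f (i, Suc i) + (\<Sum>p\<in>A1 \<union> A2 \<union> A3 \<union> A4. f p)"
      using fin by (subst sum.insert) (auto simp: A1_def A2_def A3_def A4_def J1_def J2_def)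
    also have "(\<Sum>p\<in>A1 \<union> A2 \<union> A3 \<union> A4. f p) = (\<Sum>p\<in>A1 \<union> A2 \<union> A3. f p) + (\<Sum>p\<in>A4. f p)"
      using fin by (intro sum.union_disjoint) (auto simp: A1_def A2_def A3_def A4_def J1_def J2_def)
    also have "(\<Sum>p\<in>A1 \<union> A2 \<union> A3. f p) = (\<Sum>p\<in>A1 \<union> A2. f p) + (\<Sum>p\<in>A3. f p)"
      using fin by (intro sum.union_disjoint) (auto simp: A1_def A2_def A3_def A4_def J1_def J2_def)
    also have "(\<Sum>p\<in>A1 \<union> A2. f p) = (\<Sum>p\<in>A1. f p) + (\<Sum>p\<in>A2. f p)"
      using fin by (intro sum.union_disjoint) (auto simp: A1_def A2_def A3_def A4_def J1_def J2_def)
    finally have "(\<Sum>p\<in>insert (i, Suc i) (A1 \<union> A2 \<union> A3 \<union> A4). f p)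
        = f (i, Suc i) + ((\<Sum>p\<in>A1. f p) + (\<Sum>p\<in>A2. f p) + (\<Sum>p\<in>A3. f p) + (\<Sum>p\<in>A4. f p))" .
    moreover have "(\<Sum>p\<in>A1. f p) = (\<Sum>j\<in>J1. f (j, i))" "(\<Sum>p\<in>A2. f p) = (\<Sum>j\<in>J1. f (j, Suc i))"
      "(\<Sum>p\<in>A3. f p) = (\<Sum>j\<in>J2. f (i, j))" "(\<Sum>p\<in>A4. f p) = (\<Sum>j\<in>J2. f (Suc i, j))"
      unfolding A1_def A2_def A3_def A4_def by (simp_all add: sum.reindex inj_on_def)
    ultimately show ?thesis
      unfolding index_pairs_meeting_adjacent[OF i] J1_def[symmetric] J2_def[symmetric]
        A1_def[symmetric] A2_def[symmetric] A3_def[symmetric] A4_def[symmetric] by simp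
  qed
  also have "(\<Sum>j\<in>J1. f (j, i)) + (\<Sum>j\<in>J1. f (j, Suc i)) + (\<Sum>j\<in>J2. f (i, j)) + (\<Sum>j\<in>J2. f (Suc i, j))
      = (\<Sum>j\<in>J1 \<union> J2. if j < i then f (j, i) + f (j, Suc i) else f (i, j) + f (Suc i, j))"
    by (subst sum.union_disjoint) (auto simp: J1_def J2_def sum.distrib intro!: sum.cong)
  also have "J1 \<union> J2 = {..<r} - {i, Suc i}" using i unfolding J1_def J2_def by auto
  finally show ?thesis .
qed

lemma asc_pairs_update_adjacent:
  fixes xs ys :: "int list"
  assumes len: "length ys = length xs" and i: "Suc i < length xs"
    and eq: "\<forall>j<length xs. j \<noteq> i \<and> j \<noteq> Suc i \<longrightarrow> ys ! j = xs ! j"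
  shows "int (asc_pairs ys) - int (asc_pairs xs) = (asc_ind ys (i, Suc i) - asc_ind xs (i, Suc i))
           + (\<Sum>j\<in>{..<length xs} - {i, Suc i}. asc_ind_change xs ys i j)"
proof -
  have "int (asc_pairs ys) - int (asc_pairs xs) = (\<Sum>p\<in>index_pairs (length xs). asc_ind ys p - asc_ind xs p)"
    unfolding asc_pairs_eq_sum using len by (simp add: sum_subtractf)
  also have "\<dots> = (asc_ind ys (i, Suc i) - asc_ind xs (i, Suc i))
           + (\<Sum>j\<in>{..<length xs} - {i, Suc i}. asc_ind_change xs ys i j)"
    unfolding asc_ind_change_def
    by (rule sum_index_pairs_adjacent[OF i]) (use eq in \<open>auto simp: asc_ind_def\<close>)
  finally show ?thesis .
qed

lemma asc_pairs_swap_adjacent: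
  fixes ks :: "int list"
  assumes "distinct ks" "Suc i < length ks" "ks ! i < ks ! Suc i"
  shows "asc_pairs (ks[Suc i := ks ! i, i := ks ! Suc i]) + 1 = asc_pairs ks"
proof -
  define ls where "ls = ks[Suc i := ks ! i, i := ks ! Suc i]"
  have "int (asc_pairs ls) - int (asc_pairs ks) = (asc_ind ls (i, Suc i) - asc_ind ks (i, Suc i))
           + (\<Sum>j\<in>{..<length ks} - {i, Suc i}. asc_ind_change ks ls i j)"
    by (rule asc_pairs_update_adjacent) (use assms in \<open>auto simp: ls_def\<close>)
  also have "(\<Sum>j\<in>{..<length ks} - {i, Suc i}. asc_ind_change ks ls i j) = 0"
    using assms(2) by (intro sum.neutral) (auto simp: asc_ind_change_def asc_ind_def ls_def nth_list_update)
  finally show ?thesis using assms(2,3) unfolding ls_def asc_ind_def by (simp add: nth_list_update)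
qed

text \<open>The set \<open>B'\<close> arises from \<open>B\<close> by moving the bead at \<open>u\<close> up and the bead at \<open>v\<close> down by \<open>H\<close>,
  as \<open>B(\<lambda>) = (B(\<mu>) - {\<beta>\<^sub>x, \<beta>\<^sub>y}) \<union> {\<beta>\<^sub>x + h, \<beta>\<^sub>y - h}\<close> in the paper.\<close>

definition bead_move :: "int set \<Rightarrow> int set \<Rightarrow> int \<Rightarrow> int \<Rightarrow> int \<Rightarrow> bool" where
  "bead_move B B' u v H \<longleftrightarrow> u \<in> B \<and> v \<in> B \<and> 0 < H \<and> u + H < v - H \<and> u + H \<notin> B \<and> v - H \<notin> B \<and>
     B' = B - {u, v} \<union> {u + H, v - H}"

definition beads_passed :: "int set \<Rightarrow> int \<Rightarrow> int \<Rightarrow> int \<Rightarrow> nat" where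
  "beads_passed B u v H = card (B \<inter> ({u<..<u + H} \<union> {v - H<..<v}))"

context
  fixes ks ls :: "int list" and i :: nat and H :: int
  assumes dk: "distinct ks" and dl: "distinct ls" and len: "length ls = length ks"
    and i: "Suc i < length ks" and eq: "\<forall>j<length ks. j \<noteq> i \<and> j \<noteq> Suc i \<longrightarrow> ls ! j = ks ! j"
    and Hpos: "0 < H" and HH: "ks ! i + H < ks ! Suc i - H"
    and li: "ls ! i = ks ! Suc i - H" and lsi: "ls ! Suc i = ks ! i + H"
begin

lemma shift_adjacent_others:
  assumes "j < length ks" "j \<noteq> i" "j \<noteq> Suc i"
  shows "ks ! j \<notin> {ks ! i, ks ! Suc i, ks ! i + H, ks ! Suc i - H}"
proof -
  have "ks ! j \<noteq> ks ! i" "ks ! j \<noteq> ks ! Suc i" using assms i nth_eq_iff_index_eq[OF dk] by auto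
  moreover have "ls ! j \<noteq> ls ! Suc i" "ls ! j \<noteq> ls ! i" using assms nth_eq_iff_index_eq[OF dl] i len by auto
  ultimately show ?thesis using eq assms li lsi by auto
qed

lemma set_shift_adjacent:
  "set ks = (\<lambda>j. ks ! j) ` ({..<length ks} - {i, Suc i}) \<union> {ks ! i, ks ! Suc i}"
  "set ls = (\<lambda>j. ks ! j) ` ({..<length ks} - {i, Suc i}) \<union> {ks ! i + H, ks ! Suc i - H}"
proof -
  have all: "set xs = (\<lambda>j. xs ! j) ` {..<length xs}" for xs :: "int list" by (auto simp: set_conv_nth)
  show "set ks = (\<lambda>j. ks ! j) ` ({..<length ks} - {i, Suc i}) \<union> {ks ! i, ks ! Suc i}"
    unfolding all[of ks] using i by auto
  have "set ls = (\<lambda>j. ls ! j) ` ({..<length ks} - {i, Suc i}) \<union> {ls ! i, ls ! Suc i}"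
    unfolding all[of ls] using i len by auto
  moreover have "(\<lambda>j. ls ! j) ` ({..<length ks} - {i, Suc i}) = (\<lambda>j. ks ! j) ` ({..<length ks} - {i, Suc i})"
    using eq by auto
  ultimately show "set ls = (\<lambda>j. ks ! j) ` ({..<length ks} - {i, Suc i}) \<union> {ks ! i + H, ks ! Suc i - H}"
    using li lsi by auto
qed

lemma bead_move_shift_adjacent: "bead_move (set ks) (set ls) (ks ! i) (ks ! Suc i) H"
proof -
  have others: "set ks - {ks ! i, ks ! Suc i} = (\<lambda>j. ks ! j) ` ({..<length ks} - {i, Suc i})"
    using set_shift_adjacent(1) shift_adjacent_others by auto
  have "ks ! i + H \<notin> set ks" "ks ! Suc i - H \<notin> set ks"
    using set_shift_adjacent(1) shift_adjacent_others Hpos HH by fastforce+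
  moreover have "ks ! i \<in> set ks" "ks ! Suc i \<in> set ks" using i by auto
  ultimately show ?thesis
    unfolding bead_move_def others set_shift_adjacent(2) using Hpos HH by simp
qed

lemma beads_passed_shift_adjacent:
  "beads_passed (set ks) (ks ! i) (ks ! Suc i) H = card {j \<in> {..<length ks} - {i, Suc i}.
     ks ! j \<in> {ks ! i<..<ks ! i + H} \<union> {ks ! Suc i - H<..<ks ! Suc i}}"
proof -
  define I where "I = {ks ! i<..<ks ! i + H} \<union> {ks ! Suc i - H<..<ks ! Suc i}"
  have "set ks \<inter> I = (\<lambda>j. ks ! j) ` {j \<in> {..<length ks} - {i, Suc i}. ks ! j \<in> I}"
    using set_shift_adjacent(1) Hpos HH unfolding I_def by auto
  moreover have "inj_on (\<lambda>j. ks ! j) {j \<in> {..<length ks} - {i, Suc i}. ks ! j \<in> I}"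
    using nth_eq_iff_index_eq[OF dk] unfolding inj_on_def by auto
  ultimately show ?thesis unfolding beads_passed_def I_def[symmetric] by (simp add: card_image)
qed

lemma asc_ind_change_shift_adjacent_parity:
  assumes j: "j < length ks" "j \<noteq> i" "j \<noteq> Suc i"
  shows "even (asc_ind_change ks ls i j
    - of_bool (ks ! j \<in> {ks ! i<..<ks ! i + H} \<union> {ks ! Suc i - H<..<ks ! Suc i}))"
proof -
  define u where "u = ks ! i"
  define v where "v = ks ! Suc i"
  define x where "x = ks ! j"
  have "x \<notin> {u, v, u + H, v - H}" using shift_adjacent_others[OF j] unfolding x_def u_def v_def .
  then have "x < u \<or> (u < x \<and> x < u + H) \<or> (u + H < x \<and> x < v - H) \<or> (v - H < x \<and> x < v) \<or> v < x"
    by auto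
  moreover have "asc_ind_change ks ls i j = (if j < i
      then (of_bool (x < v - H) - of_bool (x < u)) + (of_bool (x < u + H) - of_bool (x < v))
      else (of_bool (v - H < x) - of_bool (u < x)) + (of_bool (u + H < x) - of_bool (v < x)))"
    using eq j li lsi unfolding asc_ind_change_def asc_ind_def x_def u_def v_def by simp
  ultimately show ?thesis
    using Hpos HH unfolding x_def[symmetric] u_def[symmetric] v_def[symmetric] by (elim disjE) auto
qed

lemma asc_pairs_shift_adjacent:
  "even (int (asc_pairs ls) - int (asc_pairs ks) + 1 + int (beads_passed (set ks) (ks ! i) (ks ! Suc i) H))"
proof -
  define Oth where "Oth = {..<length ks} - {i, Suc i}"
  define I where "I = {ks ! i<..<ks ! i + H} \<union> {ks ! Suc i - H<..<ks ! Suc i}"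
  have "int (asc_pairs ls) - int (asc_pairs ks) = (asc_ind ls (i, Suc i) - asc_ind ks (i, Suc i))
           + (\<Sum>j\<in>Oth. asc_ind_change ks ls i j)"
    unfolding Oth_def by (rule asc_pairs_update_adjacent[OF len i eq])
  also have "asc_ind ls (i, Suc i) - asc_ind ks (i, Suc i) = -1"
    using Hpos HH li lsi unfolding asc_ind_def by auto
  finally have split: "int (asc_pairs ls) - int (asc_pairs ks) + 1 + int (card {j \<in> Oth. ks ! j \<in> I})
      = (\<Sum>j\<in>Oth. asc_ind_change ks ls i j - of_bool (ks ! j \<in> I)) + 2 * int (card {j \<in> Oth. ks ! j \<in> I})"
    unfolding Oth_def by (simp add: sum_subtractf Int_def)
  have "even (\<Sum>j\<in>Oth. asc_ind_change ks ls i j - of_bool (ks ! j \<in> I))"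
    using asc_ind_change_shift_adjacent_parity unfolding Oth_def I_def by (intro dvd_sum) auto
  then have "even (int (asc_pairs ls) - int (asc_pairs ks) + 1 + int (card {j \<in> Oth. ks ! j \<in> I}))"
    unfolding split by (rule dvd_add) simp
  then show ?thesis unfolding beads_passed_shift_adjacent Oth_def I_def .
qed

end

section \<open>Straightening steps and good sequences\<close>

text \<open>Every wedge other than the swapped one in (R1)--(R4) is \<open>v\<^bsub>k\<^sub>2 - e\<^esub> \<and> v\<^bsub>k\<^sub>1 + e\<^esub>\<close> with
  \<open>e \<ge> 0\<close> (all shifts \<open>\<gamma>', \<delta>', \<gamma>' + \<delta>'\<close> and \<open>n l i\<close> are nonnegative), and only ordered
  wedges are counted.\<close>

lemma nonzero_coeff_shift:
  assumes n: "n \<ge> 1" and l: "l \<ge> 1" and nz: "nonzero_coeff n l k1 k2 a b"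
    and ne: "(a, b) \<noteq> (k2, k1)"
  shows "\<exists>H\<ge>0. a = k2 - H \<and> b = k1 + H \<and> b < a"
proof (rule ccontr)
  assume nH: "\<not> (\<exists>H\<ge>0. a = k2 - H \<and> b = k1 + H \<and> b < a)"
  have term0: "sum_term n l k1 k2 e i0 f a b = 0" if "0 \<le> e" for e i0 f
  proof -
    have E: "{i. i0 \<le> i \<and> a = k2 - e - int n * int l * int i \<and> b = k1 + e + int n * int l * int i \<and> a > b} = {}"
    proof (rule ccontr)
      assume "{i. i0 \<le> i \<and> a = k2 - e - int n * int l * int i \<and> b = k1 + e + int n * int l * int i \<and> a > b} \<noteq> {}"
      then obtain i where i: "a = k2 - (e + int n * int l * int i)" "b = k1 + (e + int n * int l * int i)" "a > b"
        by (auto simp: algebra_simps)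
      have "0 \<le> e + int n * int l * int i" using that by simp
      then show False using nH i by blast
    qed
    show ?thesis unfolding sum_term_def E by simp
  qed
  have N: "int n * int l > 0" using n l by simp
  have g: "0 \<le> (cc n l k2 - cc n l k1) mod (int n * int l)" using N by simp
  have e: "0 \<le> (int n * (dd n l k2 - dd n l k1)) mod (int n * int l)" using N pos_mod_sign by blast
  have "straight_coeff n l k1 k2 a b q = 0" for q
    unfolding straight_coeff_def Let_def
    by (simp only: term0[OF g] term0[OF e] term0[OF add_nonneg_nonneg[OF g e]] term0[OF order_refl]
        ne if_False) simp
  then show False using nz unfolding nonzero_coeff_def by simp
qed

lemma wstepE:
  assumes "wstep n l ks ls"
  obtains i where "Suc i < length ks" "ks ! i \<le> ks ! Suc i"
    "\<forall>j<length ks. j \<noteq> i \<and> j \<noteq> Suc i \<longrightarrow> ls ! j = ks ! j"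
    "nonzero_coeff n l (ks ! i) (ks ! Suc i) (ls ! i) (ls ! Suc i)" "length ls = length ks"
    "step_m ks ls = (if (ls ! i, ls ! Suc i) = (ks ! Suc i, ks ! i) then 0 else 1)"
proof -
  obtain i where i: "i + 1 < length ks" "ks ! i \<le> ks ! (i + 1)" "\<forall>j<i. ks ! j > ks ! (j + 1)"
    "\<forall>j<length ks. j \<noteq> i \<and> j \<noteq> i + 1 \<longrightarrow> ls ! j = ks ! j"
    "nonzero_coeff n l (ks ! i) (ks ! (i + 1)) (ls ! i) (ls ! (i + 1))" "length ls = length ks"
    using assms unfolding wstep_def by blast
  have "(LEAST i. ks ! i \<le> ks ! (i + 1)) = i"
    by (rule Least_equality) (use i(2,3) in \<open>auto simp: not_le[symmetric]\<close>)
  then show ?thesis using that i unfolding step_m_def Let_def by simp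
qed

lemma step_m_cases: "step_m ks ls = 0 \<or> step_m ks ls = 1"
  unfolding step_m_def Let_def by simp

lemma swap_step:
  assumes w: "wstep n l ks ls" and m0: "step_m ks ls = 0"
  shows "mset ls = mset ks" and "distinct ks \<Longrightarrow> asc_pairs ls + 1 = asc_pairs ks"
proof -
  obtain i where i: "Suc i < length ks" "ks ! i \<le> ks ! Suc i"
    "\<forall>j<length ks. j \<noteq> i \<and> j \<noteq> Suc i \<longrightarrow> ls ! j = ks ! j" "length ls = length ks"
    "step_m ks ls = (if (ls ! i, ls ! Suc i) = (ks ! Suc i, ks ! i) then 0 else 1)"
    using wstepE[OF w] by blast
  have "ls ! i = ks ! Suc i" "ls ! Suc i = ks ! i" using i(5) m0 by (auto split: if_splits)
  then have ls: "ls = ks[Suc i := ks ! i, i := ks ! Suc i]"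
    by (intro nth_equalityI) (use i in \<open>auto simp: nth_list_update\<close>)
  show "mset ls = mset ks" unfolding ls by (rule mset_swap) (use i(1) in auto)
  assume "distinct ks"
  then have "ks ! i \<noteq> ks ! Suc i" using i(1) by (simp add: nth_eq_iff_index_eq)
  then have "ks ! i < ks ! Suc i" using i(2) by simp
  then show "asc_pairs ls + 1 = asc_pairs ks"
    unfolding ls by (rule asc_pairs_swap_adjacent[OF \<open>distinct ks\<close> i(1)])
qed

lemma shift_step:
  assumes n: "n \<ge> 1" and l: "l \<ge> 1" and w: "wstep n l ks ls" and m1: "step_m ks ls = 1"
    and dk: "distinct ks" and dl: "distinct ls"
  shows "\<exists>u v H. bead_move (set ks) (set ls) u v H \<and>
     even (int (asc_pairs ls) - int (asc_pairs ks) + 1 + int (beads_passed (set ks) u v H))"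
proof -
  obtain i where i: "Suc i < length ks" "\<forall>j<length ks. j \<noteq> i \<and> j \<noteq> Suc i \<longrightarrow> ls ! j = ks ! j"
    "nonzero_coeff n l (ks ! i) (ks ! Suc i) (ls ! i) (ls ! Suc i)" "length ls = length ks"
    "step_m ks ls = (if (ls ! i, ls ! Suc i) = (ks ! Suc i, ks ! i) then 0 else 1)"
    using wstepE[OF w] by blast
  have ne: "(ls ! i, ls ! Suc i) \<noteq> (ks ! Suc i, ks ! i)" using i(5) m1 by auto
  obtain H where H: "H \<ge> 0" "ls ! i = ks ! Suc i - H" "ls ! Suc i = ks ! i + H"
    "ks ! i + H < ks ! Suc i - H"
    using nonzero_coeff_shift[OF n l i(3) ne] by auto
  have "0 < H" using H ne by (cases "H = 0") auto
  then show ?thesis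
    using bead_move_shift_adjacent[OF dk dl i(4) i(1,2) _ H(4,2,3)]
      asc_pairs_shift_adjacent[OF dk dl i(4) i(1,2) _ H(4,2,3)] by blast
qed

lemma good_seq_shift_index:
  assumes "good_seq n l s lam mu kss"
  obtains t\<^sub>0 where "t\<^sub>0 < length kss - 1" "step_m (kss ! t\<^sub>0) (kss ! Suc t\<^sub>0) = 1"
    "\<And>t. t < length kss - 1 \<Longrightarrow> t \<noteq> t\<^sub>0 \<Longrightarrow> step_m (kss ! t) (kss ! Suc t) = 0"
proof -
  define N where "N = length kss - 1"
  define sm where "sm t = step_m (kss ! t) (kss ! Suc t)" for t
  have "(\<Sum>t<N. sm t) = (\<Sum>t<N. of_bool (sm t = 1))"
    by (rule sum.cong) (use step_m_cases in \<open>auto simp: sm_def\<close>)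
  also have "\<dots> = card ({..<N} \<inter> {t. sm t = 1})" by simp
  finally have "card ({..<N} \<inter> {t. sm t = 1}) = 1"
    using assms unfolding good_seq_def sm_def N_def by simp
  then obtain t\<^sub>0 where t0: "{..<N} \<inter> {t. sm t = 1} = {t\<^sub>0}" by (rule card_1_singletonE)
  show ?thesis
  proof
    show "t\<^sub>0 < length kss - 1" "step_m (kss ! t\<^sub>0) (kss ! Suc t\<^sub>0) = 1"
      using t0 unfolding N_def sm_def by auto
    show "step_m (kss ! t) (kss ! Suc t) = 0" if "t < length kss - 1" "t \<noteq> t\<^sub>0" for t
      using t0 that step_m_cases[of "kss ! t" "kss ! Suc t"] unfolding N_def sm_def by auto
  qed
qed

lemma good_seq_parity:
  assumes n: "n \<ge> 1" and l: "l \<ge> 1" and gs: "good_seq n l s lam mu kss"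
    and dm: "sorted_wrt (>) (beta s mu)" and dl: "sorted_wrt (>) (beta s lam)"
  shows "\<exists>u v H. bead_move (Bset s mu) (Bset s lam) u v H \<and>
     even (int (length kss - 1) + int (card (index_pairs (sum_list mu))) + int (beads_passed (Bset s mu) u v H))"
proof -
  define T where "T t = kss ! t" for t
  define N where "N = length kss - 1"
  obtain t\<^sub>0 where t0: "t\<^sub>0 < N" "step_m (T t\<^sub>0) (T (Suc t\<^sub>0)) = 1"
    and swap: "\<And>t. t < N \<Longrightarrow> t \<noteq> t\<^sub>0 \<Longrightarrow> step_m (T t) (T (Suc t)) = 0"
    using good_seq_shift_index[OF gs] unfolding T_def N_def by metis
  have ne: "kss \<noteq> []" using gs unfolding good_seq_def by simp
  have T0: "T 0 = rev (beta s mu)" using gs ne unfolding good_seq_def T_def by (simp add: hd_conv_nth)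
  have TN: "T N = beta s lam" using gs ne unfolding good_seq_def T_def N_def by (simp add: last_conv_nth)
  have wst: "wstep n l (T t) (T (Suc t))" if "t < N" for t
    using gs that ne unfolding good_seq_def T_def N_def by auto
  have mset_swap: "mset (T (Suc t)) = mset (T t)" if "t < N" "t \<noteq> t\<^sub>0" for t
    using swap_step(1)[OF wst[OF that(1)] swap[OF that]] .
  have before: "mset (T t) = mset (T 0)" if "t \<le> t\<^sub>0" for t
    using that by (induction t) (use t0 mset_swap in auto)
  have after: "mset (T t) = mset (T N)" if "Suc t\<^sub>0 \<le> t" "t \<le> N" for t
    using that(2,1) by (induction rule: inc_induct) (use mset_swap in auto)
  have "distinct (T 0)" "distinct (T N)"
    using T0 TN distinct_if_sorted_wrt_greater dm dl by auto
  then have dist: "distinct (T t)" if "t \<le> N" for t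
    using before[of t] after[of t] that mset_eq_imp_distinct_iff by (cases "t \<le> t\<^sub>0") auto
  define d where "d t = int (asc_pairs (T (Suc t))) - int (asc_pairs (T t))" for t
  have "(\<Sum>t<N. d t) = int (asc_pairs (T N)) - int (asc_pairs (T 0))"
    unfolding d_def by (rule sum_lessThan_telescope)
  also have "\<dots> = - int (card (index_pairs (sum_list mu)))"
    using asc_pairs_strict_desc[OF dl] asc_pairs_strict_asc[of "rev (beta s mu)"] dm
    by (simp add: T0 TN sorted_wrt_rev length_beta)
  moreover have "d t = -1" if "t < N" "t \<noteq> t\<^sub>0" for t
    using swap_step(2)[OF wst[OF that(1)] swap[OF that] dist[of t]] that(1) unfolding d_def by simp
  ultimately have sum_d: "d t\<^sub>0 - int (N - 1) = - int (card (index_pairs (sum_list mu)))"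
    using t0 by (simp add: sum.remove[of "{..<N}" t\<^sub>0])
  have "set (T t\<^sub>0) = Bset s mu" "set (T (Suc t\<^sub>0)) = Bset s lam"
    using mset_eq_setD[OF before[of t\<^sub>0]] mset_eq_setD[OF after[of "Suc t\<^sub>0"]] t0 T0 TN
    unfolding Bset_def by auto
  moreover obtain u v H where "bead_move (set (T t\<^sub>0)) (set (T (Suc t\<^sub>0))) u v H"
    and par: "even (d t\<^sub>0 + 1 + int (beads_passed (set (T t\<^sub>0)) u v H))"
    using shift_step[OF n l wst[OF t0(1)] t0(2) dist[of t\<^sub>0] dist[of "Suc t\<^sub>0"]] t0(1)
    unfolding d_def by auto
  moreover have "int N + int (card (index_pairs (sum_list mu))) + int (beads_passed (set (T t\<^sub>0)) u v H)
      = (d t\<^sub>0 + 1 + int (beads_passed (set (T t\<^sub>0)) u v H)) + 2 * int (card (index_pairs (sum_list mu)))"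
    using sum_d t0(1) by simp
  ultimately show ?thesis unfolding N_def by auto
qed

section \<open>The two moved beads determine \<open>h\<close>, \<open>\<beta>\<^sub>x\<close> and \<open>\<beta>\<^sub>y\<close>\<close>

lemma length_le_sum_list: "0 \<notin> set p \<Longrightarrow> length p \<le> sum_list (p :: nat list)"
  by (induction p) (auto simp: Suc_le_eq)

lemma beta_set_eq_Bset_Un:
  assumes p: "is_partition p"
  shows "beta_set s p = Bset s p \<union> {x. x \<le> s - int (sum_list p)}"
proof -
  have lp: "length p \<le> sum_list p" using p length_le_sum_list unfolding is_partition_def by blast
  have "x \<in> Bset s p \<union> {x. x \<le> s - int (sum_list p)}" if "1 \<le> i" "x = beta_num s p i" for x i
    using that beta_num_beyond_length[of p i s] lp unfolding Bset_eq_image by (cases "i \<le> sum_list p") auto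
  moreover have "x \<in> beta_set s p" if "x \<le> s - int (sum_list p)" for x
  proof -
    define i where "i = nat (s + 1 - x)"
    have "length p < i" "1 \<le> i" using that lp unfolding i_def by auto
    then have "beta_num s p i = x" using beta_num_beyond_length[of p i s] that unfolding i_def by simp
    then show ?thesis unfolding beta_set_def using \<open>1 \<le> i\<close> by blast
  qed
  ultimately show ?thesis unfolding beta_set_def Bset_eq_image by auto
qed

lemma Bset_greater:
  assumes p: "is_partition p" and x: "x \<in> Bset s p"
  shows "s - int (sum_list p) < x"
proof -
  obtain i where i: "1 \<le> i" "i \<le> sum_list p" "x = beta_num s p i" using x unfolding Bset_eq_image by auto
  have "beta_num s p (sum_list p) \<le> beta_num s p i" using beta_num_antimono[OF p i(1,2)] .
  then show ?thesis using i unfolding beta_num_def by simp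
qed

lemma bead_move_beta_set:
  assumes lam: "is_partition lam" and mu: "is_partition mu" and r: "sum_list lam = sum_list mu"
    and mv: "bead_move (Bset s mu) (Bset s lam) u v H"
  shows "bead_move (beta_set s mu) (beta_set s lam) u v H"
proof -
  have "s - int (sum_list mu) < u" "s - int (sum_list mu) < v"
    using Bset_greater[OF mu, of u s] Bset_greater[OF mu, of v s] mv unfolding bead_move_def by auto
  then show ?thesis
    using mv beta_set_eq_Bset_Un[OF mu, of s] beta_set_eq_Bset_Un[OF lam, of s]
    unfolding bead_move_def r by auto
qed

lemma card_filter_exchange2:
  assumes fin: "finite {x \<in> X. Q x}" and "a \<in> X" "b \<in> X" "a \<noteq> b" "c \<notin> X" "d \<notin> X" "c \<noteq> d"
  shows "int (card {y \<in> X - {a, b} \<union> {c, d}. Q y}) =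
     int (card {x \<in> X. Q x}) - of_bool (Q a) - of_bool (Q b) + of_bool (Q c) + of_bool (Q d)"
proof -
  define A where "A = {x \<in> X. Q x}"
  have "{y \<in> X - {a, b} \<union> {c, d}. Q y} = (A - {a, b}) \<union> ({c, d} \<inter> {y. Q y})"
    unfolding A_def by auto
  moreover have "(A - {a, b}) \<inter> ({c, d} \<inter> {y. Q y}) = {}" using assms unfolding A_def by auto
  moreover have "finite A" using fin unfolding A_def .
  ultimately have "card {y \<in> X - {a, b} \<union> {c, d}. Q y} = card (A - {a, b}) + card ({c, d} \<inter> {y. Q y})"
    by (simp add: card_Un_disjoint)
  moreover have "int (card (A - {a, b})) = int (card A) - of_bool (Q a) - of_bool (Q b)"
  proof -
    have "card (A - {a, b}) = card A - card (A \<inter> {a, b})" by (rule card_Diff_subset_Int) simp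
    moreover have "card (A \<inter> {a, b}) \<le> card A" using \<open>finite A\<close> by (intro card_mono) auto
    moreover have "int (card (A \<inter> {a, b})) = of_bool (Q a) + of_bool (Q b)"
      using assms(2-4) unfolding A_def by (cases "Q a"; cases "Q b") auto
    ultimately show ?thesis by (simp add: of_nat_diff)
  qed
  moreover have "int (card ({c, d} \<inter> {y. Q y})) = of_bool (Q c) + of_bool (Q d)"
    using \<open>c \<noteq> d\<close> by (cases "Q c"; cases "Q d") auto
  ultimately show ?thesis unfolding A_def by simp
qed

lemma beads_ge_bead_move:
  assumes lam: "is_partition lam" and mu: "is_partition mu"
    and mv: "bead_move (beta_set s mu) (beta_set s lam) u v H"
  shows "int (beads_ge s lam t) =
     int (beads_ge s mu t) + of_bool (u < t \<and> t \<le> u + H) - of_bool (v - H < t \<and> t \<le> v)"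
proof -
  have "int (beads_ge s lam t) = int (card {y \<in> beta_set s mu - {u, v} \<union> {u + H, v - H}. t \<le> y})"
    using mv unfolding beads_ge_eq_card[OF lam] bead_move_def by simp
  also have "\<dots> = int (card {x \<in> beta_set s mu. t \<le> x}) - of_bool (t \<le> u) - of_bool (t \<le> v)
      + of_bool (t \<le> u + H) + of_bool (t \<le> v - H)"
    using mv unfolding bead_move_def by (intro card_filter_exchange2 finite_beta_set_ge) auto
  finally have "int (beads_ge s lam t) = int (card {x \<in> beta_set s mu. t \<le> x}) - of_bool (t \<le> u)
      - of_bool (t \<le> v) + of_bool (t \<le> u + H) + of_bool (t \<le> v - H)" .
  then show ?thesis
    using mv unfolding beads_ge_eq_card[OF mu] bead_move_def
    by (cases "t \<le> u"; cases "t \<le> u + H"; cases "t \<le> v - H"; cases "t \<le> v") auto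
qed

lemma bead_move_diagram_data:
  assumes lam: "is_partition lam" and mu: "is_partition mu" and r: "sum_list lam = sum_list mu"
    and mv: "bead_move (Bset s mu) (Bset s lam) u v H"
  shows "hH lam mu = H" "betaI s mu (xrow lam mu) = u" "betaI s mu (yrow lam mu) = v"
proof -
  have mv': "bead_move (beta_set s mu) (beta_set s lam) u v H"
    by (rule bead_move_beta_set[OF lam mu r mv])
  note counts = beads_ge_bead_move[OF lam mu mv']
  have H: "0 < H" "u + H < v - H" using mv unfolding bead_move_def by auto
  have lam_mu: "diagram lam - (diagram lam \<inter> diagram mu) = diagram lam - diagram mu"
    and mu_lam: "diagram mu - (diagram lam \<inter> diagram mu) = diagram mu - diagram lam" by auto
  have up: "fst (head (diagram lam - diagram mu)) = beads_ge s lam (u + 1)"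
    "card (diagram lam - diagram mu) = nat (u + H - u)"
    using head_tail_diagram_diff[OF mu lam, of u "u + H" s "\<lambda>t. v - H < t \<and> t \<le> v"] counts H by auto
  have down: "fst (tail (diagram mu - diagram lam)) = beads_ge s mu v"
    using head_tail_diagram_diff[OF lam mu, of "v - H" v s "\<lambda>t. u < t \<and> t \<le> u + H"] counts H by auto
  show "hH lam mu = H" unfolding hH_def lam_mu up using H by simp
  obtain i where i: "1 \<le> i" "i \<le> sum_list mu" "u = beta_num s mu i"
    using mv unfolding bead_move_def Bset_eq_image by auto
  obtain j where j: "1 \<le> j" "j \<le> sum_list mu" "v = beta_num s mu j"
    using mv unfolding bead_move_def Bset_eq_image by auto
  have "{x \<in> beta_set s mu. u \<le> x} = insert u {x \<in> beta_set s mu. u + 1 \<le> x}"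
    using mv' unfolding bead_move_def by auto
  then have "beads_ge s mu u = beads_ge s mu (u + 1) + 1"
    using finite_beta_set_ge unfolding beads_ge_eq_card[OF mu] by simp
  moreover have "beads_ge s lam (u + 1) = beads_ge s mu (u + 1) + 1" using counts[of "u + 1"] H by simp
  ultimately have "xrow lam mu = i"
    unfolding xrow_def lam_mu up(1) using beads_ge_beta_num[OF mu i(1)] i(3) by simp
  then show "betaI s mu (xrow lam mu) = u" using betaI_eq_beta_num[OF i(1,2)] i(3) by simp
  have "yrow lam mu = j" unfolding yrow_def mu_lam down using beads_ge_beta_num[OF mu j(1)] j(3) by simp
  then show "betaI s mu (yrow lam mu) = v" using betaI_eq_beta_num[OF j(1,2)] j(3) by simp
qed

section \<open>The decomposition \<open>k = c(k) + n (d(k) - 1) + n l m(k)\<close>\<close>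

context
  fixes n l :: nat
  assumes n: "n \<ge> 1" and l: "l \<ge> 1"
begin

lemma cc_bounds: "1 \<le> cc n l k" "cc n l k \<le> int n"
proof -
  have "(k - 1) mod (int n * int l) mod int n < int n" "0 \<le> (k - 1) mod (int n * int l) mod int n"
    using n by simp_all
  then show "1 \<le> cc n l k" "cc n l k \<le> int n" unfolding cc_def by linarith+
qed

lemma dd_bounds: "1 \<le> dd n l k" "dd n l k \<le> int l"
proof -
  define a where "a = (k - 1) mod (int n * int l)"
  have a: "0 \<le> a" "a < int n * int l" using n l unfolding a_def by auto
  show "1 \<le> dd n l k" unfolding dd_def a_def[symmetric] using a n by (simp add: pos_imp_zdiv_nonneg_iff)
  have "a div int n < int l"
  proof (rule ccontr)
    assume "\<not> a div int n < int l"
    then have "int n * int l \<le> int n * (a div int n)" using n by (intro mult_left_mono) auto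
    also have "\<dots> \<le> a"
    proof -
      have "int n * (a div int n) + a mod int n = a" by simp
      moreover have "0 \<le> a mod int n" using n by simp
      ultimately show ?thesis by linarith
    qed
    finally show False using a by simp
  qed
  then show "dd n l k \<le> int l" unfolding dd_def a_def[symmetric] by simp
qed

lemma cc_dd_mm_decomp: "k = cc n l k + int n * (dd n l k - 1) + int n * int l * mm n l k"
proof -
  define a where "a = (k - 1) mod (int n * int l)"
  have "k - 1 = a + int n * int l * ((k - 1) div (int n * int l))" unfolding a_def by simp
  moreover have "a = a mod int n + int n * (a div int n)" by simp
  ultimately show ?thesis unfolding cc_def dd_def mm_def a_def[symmetric] by (simp add: algebra_simps)
qed

lemma phi_strict_mono_on_runner:
  assumes d: "dd n l k = dd n l k'" and kk: "k < k'"
  shows "phi n l k < phi n l k'"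
proof -
  define c where "c = cc n l k"
  define c' where "c' = cc n l k'"
  define m where "m = mm n l k"
  define m' where "m' = mm n l k'"
  define N where "N = int n * int l"
  have cb: "1 \<le> c" "c \<le> int n" "1 \<le> c'" "c' \<le> int n" unfolding c_def c'_def using cc_bounds by auto
  have "k = c + int n * (dd n l k - 1) + N * m" "k' = c' + int n * (dd n l k - 1) + N * m'"
    unfolding c_def c'_def m_def m'_def N_def using cc_dd_mm_decomp[of k] cc_dd_mm_decomp[of k'] d by auto
  then have lt: "c + N * m < c' + N * m'" using kk by simp
  have Nn: "int n \<le> N" unfolding N_def using l mult_left_mono[of 1 "int l" "int n"] by simp
  have ph: "phi n l k = c + int n * m" "phi n l k' = c' + int n * m'"
    unfolding phi_def c_def c'_def m_def m'_def by auto
  consider "m + 1 \<le> m'" | "m' = m" | "m' \<le> m - 1" by linarith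
  then show ?thesis
  proof cases
    case 1
    then have "int n * 1 \<le> int n * (m' - m)" using n by (intro mult_left_mono) auto
    then show ?thesis using ph cb by (simp add: algebra_simps)
  next
    case 3
    then have "N * 1 \<le> N * (m - m')" using n l unfolding N_def by (intro mult_left_mono) auto
    then show ?thesis using lt cb Nn by (simp add: algebra_simps)
  qed (use ph lt in simp)
qed

lemma phi_less_iff: "dd n l k = dd n l k' \<Longrightarrow> phi n l k < phi n l k' \<longleftrightarrow> k < k'"
  using phi_strict_mono_on_runner[of k k'] phi_strict_mono_on_runner[of k' k]
  by (cases k k' rule: linorder_cases) auto

lemma phi_le_iff: "dd n l k = dd n l k' \<Longrightarrow> phi n l k \<le> phi n l k' \<longleftrightarrow> k \<le> k'"
  using phi_less_iff[of k' k] by (simp add: not_less[symmetric])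

lemma inj_on_phi_runner: "inj_on (phi n l) {k. dd n l k = b}"
proof (rule inj_onI)
  fix x y assume "x \<in> {k. dd n l k = b}" "y \<in> {k. dd n l k = b}" "phi n l x = phi n l y"
  then show "x = y" using phi_less_iff[of x y] phi_less_iff[of y x] by (cases x y rule: linorder_cases) auto
qed

lemma dd_eq_if_mod_eq:
  assumes c: "1 \<le> c" "c \<le> int n" and d: "1 \<le> d" "d \<le> int l"
    and k: "k mod (int n * int l) = (c + int n * (d - 1)) mod (int n * int l)"
  shows "dd n l k = d"
proof -
  define N where "N = int n * int l"
  have "(k - 1) mod N = (c + int n * (d - 1) - 1) mod N"
    using k unfolding N_def[symmetric] by (rule mod_diff_cong) simp
  then have "(k - 1) mod N = (c - 1 + int n * (d - 1)) mod N" by (simp add: algebra_simps)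
  moreover have "0 \<le> c - 1 + int n * (d - 1)" using c d by simp
  moreover have "c - 1 + int n * (d - 1) < N"
  proof -
    have "int n * (d - 1) \<le> int n * (int l - 1)" using d by (intro mult_left_mono) auto
    then have "int n * (d - 1) \<le> int n * int l - int n" by (simp add: algebra_simps)
    then show ?thesis unfolding N_def using c by linarith
  qed
  ultimately have "(k - 1) mod N = c - 1 + int n * (d - 1)" by simp
  moreover have "(c - 1 + int n * (d - 1)) div int n = d - 1" using c n by simp
  ultimately show ?thesis unfolding dd_def N_def by simp
qed

text \<open>Moving by \<open>\<gamma>\<close> modulo \<open>n l\<close> exchanges the \<open>c\<close>-values and keeps the runners;
  moving by \<open>\<delta>\<close> exchanges the runners.\<close>

lemma dd_shift_gamma:
  assumes "[H = (cc n l v - cc n l u) mod (int n * int l)] (mod (int n * int l))"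
  shows "dd n l (u + H) = dd n l u" "dd n l (v - H) = dd n l v"
proof -
  define N where "N = int n * int l"
  have H: "H mod N = (cc n l v - cc n l u) mod N" using assms unfolding N_def cong_def by simp
  have du: "u = cc n l u + int n * (dd n l u - 1) + N * mm n l u" unfolding N_def by (rule cc_dd_mm_decomp)
  have dv: "v = cc n l v + int n * (dd n l v - 1) + N * mm n l v" unfolding N_def by (rule cc_dd_mm_decomp)
  have "(u + H) mod N = (u + (cc n l v - cc n l u)) mod N" using H by (metis mod_add_right_eq)
  also have "\<dots> = (cc n l v + int n * (dd n l u - 1) + N * mm n l u) mod N"
    by (subst du) (simp add: algebra_simps)
  also have "\<dots> = (cc n l v + int n * (dd n l u - 1)) mod N" by simp
  finally show "dd n l (u + H) = dd n l u"
    using dd_eq_if_mod_eq[OF cc_bounds dd_bounds] unfolding N_def by blast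
  have "(v - H) mod N = (v - (cc n l v - cc n l u)) mod N" using H by (metis mod_diff_right_eq)
  also have "\<dots> = (cc n l u + int n * (dd n l v - 1) + N * mm n l v) mod N"
    by (subst dv) (simp add: algebra_simps)
  also have "\<dots> = (cc n l u + int n * (dd n l v - 1)) mod N" by simp
  finally show "dd n l (v - H) = dd n l v"
    using dd_eq_if_mod_eq[OF cc_bounds dd_bounds] unfolding N_def by blast
qed

lemma dd_shift_delta:
  assumes "[H = (int n * (dd n l v - dd n l u)) mod (int n * int l)] (mod (int n * int l))"
  shows "dd n l (u + H) = dd n l v" "dd n l (v - H) = dd n l u"
proof -
  define N where "N = int n * int l"
  have H: "H mod N = (int n * (dd n l v - dd n l u)) mod N" using assms unfolding N_def cong_def by simp
  have du: "u = cc n l u + int n * (dd n l u - 1) + N * mm n l u" unfolding N_def by (rule cc_dd_mm_decomp)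
  have dv: "v = cc n l v + int n * (dd n l v - 1) + N * mm n l v" unfolding N_def by (rule cc_dd_mm_decomp)
  have "(u + H) mod N = (u + int n * (dd n l v - dd n l u)) mod N" using H by (metis mod_add_right_eq)
  also have "\<dots> = (cc n l u + int n * (dd n l v - 1) + N * mm n l u) mod N"
    by (subst du) (simp add: algebra_simps)
  also have "\<dots> = (cc n l u + int n * (dd n l v - 1)) mod N" by simp
  finally show "dd n l (u + H) = dd n l v"
    using dd_eq_if_mod_eq[OF cc_bounds dd_bounds] unfolding N_def by blast
  have "(v - H) mod N = (v - int n * (dd n l v - dd n l u)) mod N" using H by (metis mod_diff_right_eq)
  also have "\<dots> = (cc n l v + int n * (dd n l u - 1) + N * mm n l v) mod N"
    by (subst dv) (simp add: algebra_simps)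
  also have "\<dots> = (cc n l v + int n * (dd n l u - 1)) mod N" by simp
  finally show "dd n l (v - H) = dd n l u"
    using dd_eq_if_mod_eq[OF cc_bounds dd_bounds] unfolding N_def by blast
qed

lemma dd_eq_if_delta_zero:
  assumes "(int n * (dd n l v - dd n l u)) mod (int n * int l) = 0"
  shows "dd n l v = dd n l u"
proof (rule ccontr)
  assume ne: "dd n l v \<noteq> dd n l u"
  have "int l dvd (dd n l v - dd n l u)" using assms n by (simp add: dvd_eq_mod_eq_0[symmetric])
  then have "\<bar>int l\<bar> \<le> \<bar>dd n l v - dd n l u\<bar>" by (rule dvd_imp_le_int[rotated]) (use ne in simp)
  then show False using dd_bounds[of v] dd_bounds[of u] by auto
qed

lemma moved_runners_cross:
  assumes "0 < (int n * (dd n l v - dd n l u)) mod (int n * int l)"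
    and "[H = (int n * (dd n l v - dd n l u)) mod (int n * int l)] (mod (int n * int l))"
  shows "dd n l (u + H) = dd n l v \<and> dd n l (v - H) = dd n l u \<and> dd n l u \<noteq> dd n l v"
  using dd_shift_delta[OF assms(2)] assms(1) by auto

lemma moved_runners_same:
  assumes "[H = (cc n l v - cc n l u) mod (int n * int l)] (mod (int n * int l)) \<or>
      [H = (int n * (dd n l v - dd n l u)) mod (int n * int l)] (mod (int n * int l))"
    and "\<not> (0 < (int n * (dd n l v - dd n l u)) mod (int n * int l) \<and>
      [H = (int n * (dd n l v - dd n l u)) mod (int n * int l)] (mod (int n * int l)))"
  shows "dd n l (u + H) = dd n l u \<and> dd n l (v - H) = dd n l v"
proof (cases "[H = (cc n l v - cc n l u) mod (int n * int l)] (mod (int n * int l))")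
  case True
  then show ?thesis using dd_shift_gamma by blast
next
  case False
  then have delta: "[H = (int n * (dd n l v - dd n l u)) mod (int n * int l)] (mod (int n * int l))"
    using assms(1) by blast
  moreover have "0 \<le> (int n * (dd n l v - dd n l u)) mod (int n * int l)" using n l by simp
  ultimately have "(int n * (dd n l v - dd n l u)) mod (int n * int l) = 0" using assms(2) by auto
  then have "dd n l v = dd n l u" by (rule dd_eq_if_delta_zero)
  then show ?thesis using dd_shift_delta[OF delta] by simp
qed

end

section \<open>Parity of inversions after moving two beads\<close>

definition inv_ind :: "(int \<Rightarrow> int) \<Rightarrow> int \<Rightarrow> int \<Rightarrow> int" where
  "inv_ind d x y = of_bool (y < x \<and> d x < d y)"

definition inv_with :: "(int \<Rightarrow> int) \<Rightarrow> int \<Rightarrow> int \<Rightarrow> int" where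
  "inv_with d a x = inv_ind d x a + inv_ind d a x"

lemma inversions_on_eq_sum:
  assumes "finite S"
  shows "int (inversions_on d S) = (\<Sum>x\<in>S. \<Sum>y\<in>S. inv_ind d x y)"
proof -
  have "{(x, y). x \<in> S \<and> y \<in> S \<and> y < x \<and> d x < d y} = (S \<times> S) \<inter> {p. snd p < fst p \<and> d (fst p) < d (snd p)}"
    by auto
  then have "int (inversions_on d S) = (\<Sum>p\<in>S \<times> S. of_bool (snd p < fst p \<and> d (fst p) < d (snd p)))"
    unfolding inversions_on_def using assms by simp
  also have "\<dots> = (\<Sum>(x, y)\<in>S \<times> S. inv_ind d x y)"
    by (rule sum.cong) (auto simp: inv_ind_def)
  finally show ?thesis by (simp add: sum.cartesian_product)
qed

lemma inversions_on_insert2: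
  assumes fin: "finite P" and "a \<notin> P" "b \<notin> P" "a \<noteq> b"
  shows "int (inversions_on d (P \<union> {a, b})) = int (inversions_on d P)
     + (\<Sum>x\<in>P. inv_with d a x + inv_with d b x) + (inv_ind d a b + inv_ind d b a)"
proof -
  have S: "P \<union> {a, b} = insert a (insert b P)" by auto
  have self: "inv_ind d x x = 0" for x unfolding inv_ind_def by auto
  have "int (inversions_on d (P \<union> {a, b}))
      = (\<Sum>x\<in>insert a (insert b P). inv_ind d x a + inv_ind d x b + (\<Sum>y\<in>P. inv_ind d x y))"
    unfolding S using inversions_on_eq_sum fin assms by (simp add: algebra_simps)
  also have "\<dots> = (inv_ind d a b + (\<Sum>y\<in>P. inv_ind d a y)) + (inv_ind d b a + (\<Sum>y\<in>P. inv_ind d b y))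
      + ((\<Sum>x\<in>P. inv_ind d x a) + (\<Sum>x\<in>P. inv_ind d x b) + int (inversions_on d P))"
    using fin assms self inversions_on_eq_sum[OF fin] by (simp add: sum.distrib)
  finally show ?thesis unfolding inv_with_def by (simp add: sum.distrib algebra_simps)
qed

text \<open>A third bead \<open>x\<close> contributes an odd number of inversions with the pair \<open>a < a'\<close> of one
  runner exactly when it lies strictly between them on another runner.\<close>

lemma sum_inv_with_parity:
  assumes fin: "finite P" and aa: "a < a'" and d: "d a = d a'" and "a \<notin> P" "a' \<notin> P"
  shows "even ((\<Sum>x\<in>P. inv_with d a x + inv_with d a' x)
     + int (card {x \<in> P. d x = d a \<and> a < x \<and> x < a'}) + int (card {x \<in> P. a < x \<and> x < a'}))"
proof -
  have "(\<Sum>x\<in>P. inv_with d a x + inv_with d a' x)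
      + int (card {x \<in> P. d x = d a \<and> a < x \<and> x < a'}) + int (card {x \<in> P. a < x \<and> x < a'})
      = (\<Sum>x\<in>P. inv_with d a x + inv_with d a' x
           + of_bool (d x = d a \<and> a < x \<and> x < a') + of_bool (a < x \<and> x < a'))"
    using fin by (simp add: sum.distrib Int_def)
  moreover have "even (inv_with d a x + inv_with d a' x
      + of_bool (d x = d a \<and> a < x \<and> x < a') + of_bool (a < x \<and> x < a'))" if "x \<in> P" for x
  proof -
    have "x \<noteq> a" "x \<noteq> a'" using that assms by auto
    then show ?thesis using aa d unfolding inv_with_def inv_ind_def
      by (cases "x < a"; cases "x < a'"; cases "d x < d a"; cases "d a < d x") auto
  qed
  ultimately show ?thesis by (simp add: dvd_sum)
qed

lemma card_filter_interval_split:
  fixes P :: "int set"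
  assumes "finite P" "a \<le> b" "b \<le> c" "b \<notin> P"
  shows "card {x \<in> P. a < x \<and> x < c} = card {x \<in> P. a < x \<and> x < b} + card {x \<in> P. b < x \<and> x < c}"
proof -
  have "\<forall>x\<in>P. x \<noteq> b" using assms(4) by auto
  then have "{x \<in> P. a < x \<and> x < c} = {x \<in> P. a < x \<and> x < b} \<union> {x \<in> P. b < x \<and> x < c}"
    using assms(2,3) by force
  then show ?thesis using assms(1) by (simp add: card_Un_disjoint disjoint_iff)
qed

lemma card_Int_two_intervals:
  fixes P :: "int set"
  assumes "finite P" "U \<le> V"
  shows "card (P \<inter> ({u<..<U} \<union> {V<..<v})) = card {x \<in> P. u < x \<and> x < U} + card {x \<in> P. V < x \<and> x < v}"
proof -
  have "P \<inter> ({u<..<U} \<union> {V<..<v}) = {x \<in> P. u < x \<and> x < U} \<union> {x \<in> P. V < x \<and> x < v}" by auto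
  then show ?thesis using assms by (simp add: card_Un_disjoint disjoint_iff)
qed

lemma inversions_on_parity_same:
  assumes fin: "finite P" and o: "u < U" "U < V" "V < v"
    and nP: "u \<notin> P" "U \<notin> P" "V \<notin> P" "v \<notin> P" and dU: "d U = d u" and dV: "d V = d v"
  shows "even (int (inversions_on d (P \<union> {u, v})) + int (inversions_on d (P \<union> {U, V}))
     + int (card {x \<in> P. d x = d u \<and> u < x \<and> x < U}) + int (card {x \<in> P. d x = d v \<and> V < x \<and> x < v})
     + int (card (P \<inter> ({u<..<U} \<union> {V<..<v}))))"
proof -
  define S1 where "S1 = (\<Sum>x\<in>P. inv_with d u x + inv_with d U x)"
  define S2 where "S2 = (\<Sum>x\<in>P. inv_with d V x + inv_with d v x)"
  have "inv_ind d u v + inv_ind d v u + (inv_ind d U V + inv_ind d V U) = 2 * of_bool (d v < d u)"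
    using o dU dV unfolding inv_ind_def by auto
  then have "int (inversions_on d (P \<union> {u, v})) + int (inversions_on d (P \<union> {U, V}))
      = 2 * (int (inversions_on d P) + of_bool (d v < d u)) + S1 + S2"
    using inversions_on_insert2[OF fin nP(1,4), of d] inversions_on_insert2[OF fin nP(2,3), of d] o
    unfolding S1_def S2_def by (simp add: sum.distrib algebra_simps)
  then have "int (inversions_on d (P \<union> {u, v})) + int (inversions_on d (P \<union> {U, V}))
     + int (card {x \<in> P. d x = d u \<and> u < x \<and> x < U}) + int (card {x \<in> P. d x = d v \<and> V < x \<and> x < v})
     + int (card (P \<inter> ({u<..<U} \<union> {V<..<v})))
     = 2 * (int (inversions_on d P) + of_bool (d v < d u))
       + (S1 + int (card {x \<in> P. d x = d u \<and> u < x \<and> x < U}) + int (card {x \<in> P. u < x \<and> x < U}))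
       + (S2 + int (card {x \<in> P. d x = d V \<and> V < x \<and> x < v}) + int (card {x \<in> P. V < x \<and> x < v}))"
    using card_Int_two_intervals[OF fin less_imp_le[OF o(2)]] dV by simp
  also have "even \<dots>"
  proof -
    note e1 = sum_inv_with_parity[OF fin o(1) dU[symmetric] nP(1,2)]
      and e2 = sum_inv_with_parity[OF fin o(3) dV nP(3,4)]
    show ?thesis unfolding S1_def S2_def by (rule dvd_add[OF dvd_add[OF _ e1] e2]) simp
  qed
  finally show ?thesis .
qed

lemma inversions_on_parity_cross:
  assumes fin: "finite P" and o: "u < U" "U < V" "V < v"
    and nP: "u \<notin> P" "U \<notin> P" "V \<notin> P" "v \<notin> P"
    and dU: "d U = d v" and dV: "d V = d u" and ne: "d u \<noteq> d v"
  shows "even (int (inversions_on d (P \<union> {u, v})) + int (inversions_on d (P \<union> {U, V}))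
     + int (card {x \<in> P. d x = d u \<and> u < x \<and> x < V}) + int (card {x \<in> P. d x = d v \<and> U < x \<and> x < v})
     + 1 + int (card (P \<inter> ({u<..<U} \<union> {V<..<v}))))"
proof -
  define S1 where "S1 = (\<Sum>x\<in>P. inv_with d u x + inv_with d V x)"
  define S2 where "S2 = (\<Sum>x\<in>P. inv_with d U x + inv_with d v x)"
  define D where "D = int (card {x \<in> P. U < x \<and> x < V})"
  have "inv_ind d u v + inv_ind d v u + (inv_ind d U V + inv_ind d V U) = 1"
    using o dU dV ne unfolding inv_ind_def by auto
  then have "int (inversions_on d (P \<union> {u, v})) + int (inversions_on d (P \<union> {U, V}))
      = 2 * int (inversions_on d P) + S1 + S2 + 1"
    using inversions_on_insert2[OF fin nP(1,4), of d] inversions_on_insert2[OF fin nP(2,3), of d] o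
    unfolding S1_def S2_def by (simp add: sum.distrib algebra_simps)
  moreover have "card {x \<in> P. u < x \<and> x < V} = card {x \<in> P. u < x \<and> x < U} + card {x \<in> P. U < x \<and> x < V}"
    and "card {x \<in> P. U < x \<and> x < v} = card {x \<in> P. U < x \<and> x < V} + card {x \<in> P. V < x \<and> x < v}"
    using card_filter_interval_split[OF fin] o nP by auto
  ultimately have "int (inversions_on d (P \<union> {u, v})) + int (inversions_on d (P \<union> {U, V}))
     + int (card {x \<in> P. d x = d u \<and> u < x \<and> x < V}) + int (card {x \<in> P. d x = d v \<and> U < x \<and> x < v})
     + 1 + int (card (P \<inter> ({u<..<U} \<union> {V<..<v})))
     = 2 * (int (inversions_on d P) + 1 - D)
       + (S1 + int (card {x \<in> P. d x = d u \<and> u < x \<and> x < V}) + int (card {x \<in> P. u < x \<and> x < V}))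
       + (S2 + int (card {x \<in> P. d x = d U \<and> U < x \<and> x < v}) + int (card {x \<in> P. U < x \<and> x < v}))"
    using card_Int_two_intervals[OF fin less_imp_le[OF o(2)]] dU unfolding D_def by simp
  also have "even \<dots>"
  proof -
    note e1 = sum_inv_with_parity[OF fin less_trans[OF o(1,2)] dV[symmetric] nP(1,3)]
      and e2 = sum_inv_with_parity[OF fin less_trans[OF o(2,3)] dU nP(2,4)]
    show ?thesis unfolding S1_def S2_def by (rule dvd_add[OF dvd_add[OF _ e1] e2]) simp
  qed
  finally show ?thesis .
qed

section \<open>Runners of the abacus and the heights of \<open>\<rho>\<close> and \<open>\<rho>'\<close>\<close>

lemma Pi_multi_nth_partition:
  "lams \<in> Pi_multi l m \<Longrightarrow> 1 \<le> b \<Longrightarrow> b \<le> l \<Longrightarrow> is_partition (lams ! (b - 1))"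
  unfolding Pi_multi_def by (auto intro!: nth_mem)

lemma beta_set_component:
  assumes cor: "corresp n l ss lams lam" and b: "1 \<le> b" "b \<le> l"
  shows "beta_set (ss ! (b - 1)) (lams ! (b - 1)) = phi n l ` {k \<in> beta_set (sum_list ss) lam. dd n l k = int b}"
proof (rule set_eqI)
  fix x
  define S1 where "S1 = {(int (partI (lams ! (b - 1)) i) + ss ! (b - 1) + 1 - int i, int b) | b i.
         1 \<le> b \<and> b \<le> l \<and> 1 \<le> i}"
  define S2 where "S2 = {(phi n l k, dd n l k) | k. k \<in> {int (partI lam i) + sum_list ss + 1 - int i | i. 1 \<le> i}}"
  have "x \<in> beta_set (ss ! (b - 1)) (lams ! (b - 1)) \<longleftrightarrow> (x, int b) \<in> S1"
  proof
    assume "x \<in> beta_set (ss ! (b - 1)) (lams ! (b - 1))"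
    then obtain i where "1 \<le> i" "x = beta_num (ss ! (b - 1)) (lams ! (b - 1)) i"
      unfolding beta_set_def by auto
    then show "(x, int b) \<in> S1" unfolding S1_def beta_num_def using b by blast
  next
    assume "(x, int b) \<in> S1"
    then obtain b' i where "1 \<le> i" "(x, int b) = (int (partI (lams ! (b' - 1)) i) + ss ! (b' - 1) + 1 - int i, int b')"
      unfolding S1_def by blast
    then show "x \<in> beta_set (ss ! (b - 1)) (lams ! (b - 1))" unfolding beta_set_def beta_num_def by auto
  qed
  also have "\<dots> \<longleftrightarrow> (x, int b) \<in> S2" using cor unfolding corresp_def S1_def S2_def by simp
  also have "\<dots> \<longleftrightarrow> x \<in> phi n l ` {k \<in> beta_set (sum_list ss) lam. dd n l k = int b}"
  proof
    assume "(x, int b) \<in> S2"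
    then obtain k i where "1 \<le> i" "k = int (partI lam i) + sum_list ss + 1 - int i" "x = phi n l k" "int b = dd n l k"
      unfolding S2_def by blast
    then show "x \<in> phi n l ` {k \<in> beta_set (sum_list ss) lam. dd n l k = int b}"
      unfolding beta_set_def beta_num_def by auto
  next
    assume "x \<in> phi n l ` {k \<in> beta_set (sum_list ss) lam. dd n l k = int b}"
    then obtain k i where "1 \<le> i" "k = beta_num (sum_list ss) lam i" "x = phi n l k" "int b = dd n l k"
      unfolding beta_set_def by auto
    then show "(x, int b) \<in> S2" unfolding S2_def beta_num_def by blast
  qed
  finally show "x \<in> beta_set (ss ! (b - 1)) (lams ! (b - 1))
      \<longleftrightarrow> x \<in> phi n l ` {k \<in> beta_set (sum_list ss) lam. dd n l k = int b}" .
qed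

lemma beads_ge_runner:
  assumes n: "n \<ge> 1" and l: "l \<ge> 1" and q: "is_partition q"
    and X: "beta_set c q = phi n l ` {k \<in> X. dd n l k = b}"
  shows "beads_ge c q t = card {k \<in> X. dd n l k = b \<and> t \<le> phi n l k}"
    and "finite {k \<in> X. dd n l k = b \<and> t \<le> phi n l k}"
proof -
  have im: "{x \<in> beta_set c q. t \<le> x} = phi n l ` {k \<in> X. dd n l k = b \<and> t \<le> phi n l k}"
    unfolding X by auto
  have inj: "inj_on (phi n l) {k \<in> X. dd n l k = b \<and> t \<le> phi n l k}"
    using inj_on_phi_runner[OF n l, of b] by (rule inj_on_subset) auto
  show "beads_ge c q t = card {k \<in> X. dd n l k = b \<and> t \<le> phi n l k}"
    unfolding beads_ge_eq_card[OF q] im using card_image[OF inj] .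
  show "finite {k \<in> X. dd n l k = b \<and> t \<le> phi n l k}"
    using finite_beta_set_ge[of c q t] unfolding im using finite_image_iff[OF inj] by simp
qed

lemma ht_diagram_diff_runner:
  assumes n: "n \<ge> 1" and l: "l \<ge> 1" and f: "is_partition f" and g: "is_partition g"
    and Ng: "\<And>t. beads_ge c g t = card {k \<in> X. dd n l k = b \<and> t \<le> phi n l k}"
    and fin: "\<And>t. finite {k \<in> X. dd n l k = b \<and> t \<le> phi n l k}"
    and da: "dd n l a = b" and da': "dd n l a' = b" and aa: "a < a'"
    and counts: "\<And>t. int (beads_ge c g t) =
       int (beads_ge c f t) + of_bool (phi n l a < t \<and> t \<le> phi n l a') - of_bool (E t)"
    and E: "\<And>t. phi n l a < t \<Longrightarrow> t \<le> phi n l a' \<Longrightarrow> \<not> E t"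
  shows "ht (diagram g - diagram f) = int (card {k \<in> X. dd n l k = b \<and> a < k \<and> k < a'})"
proof -
  define p where "p = phi n l a"
  define p' where "p' = phi n l a'"
  have pp: "p < p'" unfolding p_def p'_def using phi_strict_mono_on_runner[OF n l _ aa] da da' by simp
  note ht = head_tail_diagram_diff[OF f g pp counts[folded p_def p'_def] E[folded p_def p'_def]]
  have "p + 1 \<le> phi n l k \<longleftrightarrow> a < k" "p' \<le> phi n l k \<longleftrightarrow> a' \<le> k" if "dd n l k = b" for k
    using phi_less_iff[OF n l, of a k] phi_le_iff[OF n l, of a' k] that da da'
    unfolding p_def p'_def by auto
  then have split: "{k \<in> X. dd n l k = b \<and> p + 1 \<le> phi n l k} =
     {k \<in> X. dd n l k = b \<and> p' \<le> phi n l k} \<union> {k \<in> X. dd n l k = b \<and> a < k \<and> k < a'}"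
    and disj: "{k \<in> X. dd n l k = b \<and> p' \<le> phi n l k} \<inter> {k \<in> X. dd n l k = b \<and> a < k \<and> k < a'} = {}"
    using aa by auto
  have fin2: "finite {k \<in> X. dd n l k = b \<and> a < k \<and> k < a'}"
    by (rule finite_subset[OF _ fin[of "p + 1"]]) (use split in blast)
  have "beads_ge c g (p + 1) = beads_ge c g p' + card {k \<in> X. dd n l k = b \<and> a < k \<and> k < a'}"
    unfolding Ng split card_Un_disjoint[OF fin fin2 disj] ..
  then show ?thesis unfolding ht_def using ht(1,2) by simp
qed

lemma rho_pair_eq_diagram_diffs:
  assumes rp: "rho_pair l lams mus rho rho'"
    and bu: "1 \<le> bu" "bu \<le> l" and bv: "1 \<le> bv" "bv \<le> l"
    and same: "\<And>b. 1 \<le> b \<Longrightarrow> b \<le> l \<Longrightarrow> b \<noteq> bu \<Longrightarrow> b \<noteq> bv \<Longrightarrow>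
               diagram (lams ! (b - 1)) = diagram (mus ! (b - 1))"
    and Du: "diagram (lams ! (bu - 1)) \<noteq> diagram (mus ! (bu - 1))"
    and Dv: "diagram (lams ! (bv - 1)) \<noteq> diagram (mus ! (bv - 1))"
    and Dv_sub: "bu \<noteq> bv \<Longrightarrow> \<not> diagram (mus ! (bv - 1)) \<subseteq> diagram (lams ! (bv - 1))"
  shows "rho = diagram (lams ! (bu - 1)) - diagram (mus ! (bu - 1))"
    and "rho' = diagram (mus ! (bv - 1)) - diagram (lams ! (bv - 1))"
proof -
  have "rho = diagram (lams ! (bu - 1)) - diagram (mus ! (bu - 1)) \<and>
    rho' = diagram (mus ! (bv - 1)) - diagram (lams ! (bv - 1))"
    using rp unfolding rho_pair_def
  proof (elim disjE exE)
    fix d d' assume "condJ1 l lams mus d d' rho rho'"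
    then have J: "d \<noteq> d'" "1 \<le> d" "d \<le> l" "1 \<le> d'" "d' \<le> l"
      "diagram (mus ! (d - 1)) \<subseteq> diagram (lams ! (d - 1))"
      "rho = diagram (lams ! (d - 1)) - diagram (mus ! (d - 1))"
      "rho' = diagram (mus ! (d' - 1)) - diagram (lams ! (d' - 1))"
      "ribbon rho" "ribbon rho'" unfolding condJ1_def by auto
    then have "diagram (lams ! (d - 1)) \<noteq> diagram (mus ! (d - 1))"
      "diagram (lams ! (d' - 1)) \<noteq> diagram (mus ! (d' - 1))" unfolding ribbon_def by auto
    then have "d = bu \<or> d = bv" "d' = bu \<or> d' = bv" using same J by blast+
    moreover have "d \<noteq> bv" if "bu \<noteq> bv" using Dv_sub[OF that] J(6) by auto
    ultimately have "d = bu" "d' = bv" using J(1) by auto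
    then show ?thesis using J by simp
  next
    fix d assume "condJ2 l lams mus d rho rho'"
    then have J: "\<forall>b. 1 \<le> b \<and> b \<le> l \<and> b \<noteq> d \<longrightarrow> lams ! (b - 1) = mus ! (b - 1)"
      "rho = diagram (lams ! (d - 1)) - (diagram (lams ! (d - 1)) \<inter> diagram (mus ! (d - 1)))"
      "rho' = diagram (mus ! (d - 1)) - (diagram (lams ! (d - 1)) \<inter> diagram (mus ! (d - 1)))"
      unfolding condJ2_def by auto
    have "d = bu" "d = bv" using J(1) Du Dv bu bv by metis+
    then show ?thesis using J by auto
  qed
  then show "rho = diagram (lams ! (bu - 1)) - diagram (mus ! (bu - 1))"
    and "rho' = diagram (mus ! (bv - 1)) - diagram (lams ! (bv - 1))" by auto
qed

lemma of_bool_le_diff: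
  fixes a b t :: int
  shows "a < b \<Longrightarrow> of_bool (t \<le> b) - of_bool (t \<le> a) = (of_bool (a < t \<and> t \<le> b) :: int)"
  by auto

context
  fixes n l m :: nat and ss :: "int list" and lams mus :: "nat list list" and lam mu :: "nat list"
    and u v H :: int
  assumes n: "n \<ge> 1" and l: "l \<ge> 1"
    and lams: "lams \<in> Pi_multi l m" and mus: "mus \<in> Pi_multi l m"
    and plam: "is_partition lam" and pmu: "is_partition mu"
    and cl: "corresp n l ss lams lam" and cm: "corresp n l ss mus mu"
    and r: "sum_list lam = sum_list mu"
    and mv: "bead_move (Bset (sum_list ss) mu) (Bset (sum_list ss) lam) u v H"
begin

lemmas mv_beta_set = bead_move_beta_set[OF plam pmu r mv]

lemma beads_ge_components:
  assumes b: "1 \<le> b" "b \<le> l"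
  shows "int (beads_ge (ss ! (b - 1)) (lams ! (b - 1)) t) = int (beads_ge (ss ! (b - 1)) (mus ! (b - 1)) t)
     - of_bool (dd n l u = int b \<and> t \<le> phi n l u) - of_bool (dd n l v = int b \<and> t \<le> phi n l v)
     + of_bool (dd n l (u + H) = int b \<and> t \<le> phi n l (u + H))
     + of_bool (dd n l (v - H) = int b \<and> t \<le> phi n l (v - H))"
proof -
  note runner = beads_ge_runner[OF n l _ beta_set_component[OF _ b]]
  have "int (beads_ge (ss ! (b - 1)) (lams ! (b - 1)) t)
      = int (card {k \<in> beta_set (sum_list ss) mu - {u, v} \<union> {u + H, v - H}. dd n l k = int b \<and> t \<le> phi n l k})"
    using runner(1)[OF Pi_multi_nth_partition[OF lams b] cl] mv_beta_set unfolding bead_move_def by simp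
  also have "\<dots> = int (beads_ge (ss ! (b - 1)) (mus ! (b - 1)) t)
     - of_bool (dd n l u = int b \<and> t \<le> phi n l u) - of_bool (dd n l v = int b \<and> t \<le> phi n l v)
     + of_bool (dd n l (u + H) = int b \<and> t \<le> phi n l (u + H))
     + of_bool (dd n l (v - H) = int b \<and> t \<le> phi n l (v - H))"
    unfolding runner(1)[OF Pi_multi_nth_partition[OF mus b] cm]
    by (rule card_filter_exchange2)
      (use runner(2)[OF Pi_multi_nth_partition[OF mus b] cm] mv_beta_set in \<open>auto simp: bead_move_def\<close>)
  finally show ?thesis .
qed

text \<open>The bead at \<open>u\<close> moves to \<open>w\<^sub>1\<close> on its runner and the bead at \<open>v\<close> moves to \<open>w\<^sub>2\<close> on its
  runner; when both beads share a runner, the lower one goes to the lower target.\<close>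

context
  fixes w\<^sub>1 w\<^sub>2 :: int
  assumes w: "{w\<^sub>1, w\<^sub>2} = {u + H, v - H}" and dw1: "dd n l w\<^sub>1 = dd n l u" and dw2: "dd n l w\<^sub>2 = dd n l v"
    and order: "dd n l u = dd n l v \<Longrightarrow> w\<^sub>1 = u + H"
begin

lemma moved_bead_targets:
  shows "u < w\<^sub>1" "w\<^sub>1 < v" "u < w\<^sub>2" "w\<^sub>2 < v"
    and "phi n l u < phi n l w\<^sub>1" "phi n l w\<^sub>2 < phi n l v"
    and "dd n l u = dd n l v \<Longrightarrow> phi n l w\<^sub>1 < phi n l w\<^sub>2"
proof -
  have H: "0 < H" "u + H < v - H" using mv unfolding bead_move_def by auto
  show w_range: "u < w\<^sub>1" "w\<^sub>1 < v" "u < w\<^sub>2" "w\<^sub>2 < v" using w H by (auto simp: doubleton_eq_iff)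
  show "phi n l u < phi n l w\<^sub>1" "phi n l w\<^sub>2 < phi n l v"
    using phi_strict_mono_on_runner[OF n l] dw1 dw2 w_range by auto
  assume same: "dd n l u = dd n l v"
  then have "w\<^sub>1 = u + H" "w\<^sub>2 = v - H" using order w H by (auto simp: doubleton_eq_iff)
  then show "phi n l w\<^sub>1 < phi n l w\<^sub>2"
    using phi_strict_mono_on_runner[OF n l, of w\<^sub>1 w\<^sub>2] dw1 dw2 H same by auto
qed

lemma sum_of_bool_targets: "of_bool (P (u + H)) + of_bool (P (v - H)) = (of_bool (P w\<^sub>1) + of_bool (P w\<^sub>2) :: int)"
  using w mv unfolding bead_move_def by (auto simp: doubleton_eq_iff)

lemma beads_ge_runner_u:
  "int (beads_ge (ss ! (nat (dd n l u) - 1)) (lams ! (nat (dd n l u) - 1)) t)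
     = int (beads_ge (ss ! (nat (dd n l u) - 1)) (mus ! (nat (dd n l u) - 1)) t)
       + of_bool (phi n l u < t \<and> t \<le> phi n l w\<^sub>1)
       - of_bool (dd n l u = dd n l v \<and> phi n l w\<^sub>2 < t \<and> t \<le> phi n l v)"
proof -
  define b where "b = nat (dd n l u)"
  have b: "1 \<le> b" "b \<le> l" "int b = dd n l u" unfolding b_def using dd_bounds[OF n l, of u] by auto
  have "of_bool (dd n l (u + H) = int b \<and> t \<le> phi n l (u + H))
      + of_bool (dd n l (v - H) = int b \<and> t \<le> phi n l (v - H))
      = (of_bool (t \<le> phi n l w\<^sub>1) + of_bool (dd n l u = dd n l v \<and> t \<le> phi n l w\<^sub>2) :: int)"
    using sum_of_bool_targets[of "\<lambda>k. dd n l k = int b \<and> t \<le> phi n l k"] dw1 dw2 b(3) by auto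
  then show ?thesis
    using beads_ge_components[OF b(1,2), of t] b(3) of_bool_le_diff[OF moved_bead_targets(5), of t]
      of_bool_le_diff[OF moved_bead_targets(6), of t]
    unfolding b_def[symmetric] by (cases "dd n l u = dd n l v") auto
qed

lemma beads_ge_runner_v:
  "int (beads_ge (ss ! (nat (dd n l v) - 1)) (mus ! (nat (dd n l v) - 1)) t)
     = int (beads_ge (ss ! (nat (dd n l v) - 1)) (lams ! (nat (dd n l v) - 1)) t)
       + of_bool (phi n l w\<^sub>2 < t \<and> t \<le> phi n l v)
       - of_bool (dd n l u = dd n l v \<and> phi n l u < t \<and> t \<le> phi n l w\<^sub>1)"
proof -
  define b where "b = nat (dd n l v)"
  have b: "1 \<le> b" "b \<le> l" "int b = dd n l v" unfolding b_def using dd_bounds[OF n l, of v] by auto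
  have "of_bool (dd n l (u + H) = int b \<and> t \<le> phi n l (u + H))
      + of_bool (dd n l (v - H) = int b \<and> t \<le> phi n l (v - H))
      = (of_bool (dd n l u = dd n l v \<and> t \<le> phi n l w\<^sub>1) + of_bool (t \<le> phi n l w\<^sub>2) :: int)"
    using sum_of_bool_targets[of "\<lambda>k. dd n l k = int b \<and> t \<le> phi n l k"] dw1 dw2 b(3) by auto
  then show ?thesis
    using beads_ge_components[OF b(1,2), of t] b(3) of_bool_le_diff[OF moved_bead_targets(5), of t]
      of_bool_le_diff[OF moved_bead_targets(6), of t]
    unfolding b_def[symmetric] by (cases "dd n l u = dd n l v") auto
qed

lemma rho_pair_eq_runner_diffs:
  assumes rp: "rho_pair l lams mus rho rho'"
  shows "rho = diagram (lams ! (nat (dd n l u) - 1)) - diagram (mus ! (nat (dd n l u) - 1))"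
    and "rho' = diagram (mus ! (nat (dd n l v) - 1)) - diagram (lams ! (nat (dd n l v) - 1))"
proof -
  define bu where "bu = nat (dd n l u)"
  define bv where "bv = nat (dd n l v)"
  have bu: "1 \<le> bu" "bu \<le> l" "int bu = dd n l u" unfolding bu_def using dd_bounds[OF n l, of u] by auto
  have bv: "1 \<le> bv" "bv \<le> l" "int bv = dd n l v" unfolding bv_def using dd_bounds[OF n l, of v] by auto
  have parts: "is_partition (lams ! (b - 1))" "is_partition (mus ! (b - 1))" if "1 \<le> b" "b \<le> l" for b
    using Pi_multi_nth_partition lams mus that by auto
  have other: "diagram (lams ! (b - 1)) = diagram (mus ! (b - 1))"
    if "1 \<le> b" "b \<le> l" "b \<noteq> bu" "b \<noteq> bv" for b
  proof (rule diagram_eq_if_beads_ge_eq[OF parts[OF that(1,2)]])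
    have "dd n l (u + H) \<in> {dd n l u, dd n l v}" "dd n l (v - H) \<in> {dd n l u, dd n l v}"
      using w dw1 dw2 by (auto simp: doubleton_eq_iff)
    then show "beads_ge (ss ! (b - 1)) (lams ! (b - 1)) t = beads_ge (ss ! (b - 1)) (mus ! (b - 1)) t" for t
      using beads_ge_components[OF that(1,2), of t] that bu(3) bv(3) by (auto simp: doubleton_eq_iff)
  qed
  have "beads_ge (ss ! (bu - 1)) (mus ! (bu - 1)) (phi n l w\<^sub>1) < beads_ge (ss ! (bu - 1)) (lams ! (bu - 1)) (phi n l w\<^sub>1)"
    using beads_ge_runner_u[of "phi n l w\<^sub>1"] moved_bead_targets(5,7) unfolding bu_def by fastforce
  then have "\<not> diagram (lams ! (bu - 1)) \<subseteq> diagram (mus ! (bu - 1))"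
    using beads_ge_mono_diagram[OF parts[OF bu(1,2)]] by (meson not_le)
  moreover have "beads_ge (ss ! (bv - 1)) (lams ! (bv - 1)) (phi n l v) < beads_ge (ss ! (bv - 1)) (mus ! (bv - 1)) (phi n l v)"
    using beads_ge_runner_v[of "phi n l v"] moved_bead_targets(6,7) unfolding bv_def by fastforce
  then have "\<not> diagram (mus ! (bv - 1)) \<subseteq> diagram (lams ! (bv - 1))"
    using beads_ge_mono_diagram[OF parts(2,1)[OF bv(1,2)]] by (meson not_le)
  ultimately show "rho = diagram (lams ! (nat (dd n l u) - 1)) - diagram (mus ! (nat (dd n l u) - 1))"
    and "rho' = diagram (mus ! (nat (dd n l v) - 1)) - diagram (lams ! (nat (dd n l v) - 1))"
    using rho_pair_eq_diagram_diffs[OF rp bu(1,2) bv(1,2) other] unfolding bu_def bv_def by blast+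
qed

lemma ht_rho_pair:
  assumes rp: "rho_pair l lams mus rho rho'"
  shows "ht rho + ht rho' =
     int (card {k \<in> Bset (sum_list ss) mu - {u, v}. dd n l k = dd n l u \<and> u < k \<and> k < w\<^sub>1})
     + int (card {k \<in> Bset (sum_list ss) mu - {u, v}. dd n l k = dd n l v \<and> w\<^sub>2 < k \<and> k < v})"
proof -
  define bu where "bu = nat (dd n l u)"
  define bv where "bv = nat (dd n l v)"
  have bu: "1 \<le> bu" "bu \<le> l" "int bu = dd n l u" unfolding bu_def using dd_bounds[OF n l, of u] by auto
  have bv: "1 \<le> bv" "bv \<le> l" "int bv = dd n l v" unfolding bv_def using dd_bounds[OF n l, of v] by auto
  note targets = moved_bead_targets
  have pu: "is_partition (lams ! (bu - 1))" "is_partition (mus ! (bu - 1))"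
    and pv: "is_partition (lams ! (bv - 1))" "is_partition (mus ! (bv - 1))"
    using Pi_multi_nth_partition lams mus bu bv by auto
  have ht_u: "ht rho = int (card {k \<in> beta_set (sum_list ss) lam. dd n l k = int bu \<and> u < k \<and> k < w\<^sub>1})"
    unfolding rho_pair_eq_runner_diffs(1)[OF rp] bu_def[symmetric]
  proof (rule ht_diagram_diff_runner[OF n l pu(2,1) beads_ge_runner[OF n l pu(1) beta_set_component[OF cl bu(1,2)]],
        where E = "\<lambda>t. dd n l u = dd n l v \<and> phi n l w\<^sub>2 < t \<and> t \<le> phi n l v"])
    show "dd n l u = int bu" "dd n l w\<^sub>1 = int bu" "u < w\<^sub>1" using bu(3) dw1 targets by auto
    show "int (beads_ge (ss ! (bu - 1)) (lams ! (bu - 1)) t) = int (beads_ge (ss ! (bu - 1)) (mus ! (bu - 1)) t)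
        + of_bool (phi n l u < t \<and> t \<le> phi n l w\<^sub>1) - of_bool (dd n l u = dd n l v \<and> phi n l w\<^sub>2 < t \<and> t \<le> phi n l v)"
      for t using beads_ge_runner_u[of t] unfolding bu_def .
    show "\<not> (dd n l u = dd n l v \<and> phi n l w\<^sub>2 < t \<and> t \<le> phi n l v)" if "t \<le> phi n l w\<^sub>1" for t
      using that targets(7) by fastforce
  qed
  have ht_v: "ht rho' = int (card {k \<in> beta_set (sum_list ss) mu. dd n l k = int bv \<and> w\<^sub>2 < k \<and> k < v})"
    unfolding rho_pair_eq_runner_diffs(2)[OF rp] bv_def[symmetric]
  proof (rule ht_diagram_diff_runner[OF n l pv(1,2) beads_ge_runner[OF n l pv(2) beta_set_component[OF cm bv(1,2)]],
        where E = "\<lambda>t. dd n l u = dd n l v \<and> phi n l u < t \<and> t \<le> phi n l w\<^sub>1"])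
    show "dd n l w\<^sub>2 = int bv" "dd n l v = int bv" "w\<^sub>2 < v" using bv(3) dw2 targets by auto
    show "int (beads_ge (ss ! (bv - 1)) (mus ! (bv - 1)) t) = int (beads_ge (ss ! (bv - 1)) (lams ! (bv - 1)) t)
        + of_bool (phi n l w\<^sub>2 < t \<and> t \<le> phi n l v) - of_bool (dd n l u = dd n l v \<and> phi n l u < t \<and> t \<le> phi n l w\<^sub>1)"
      for t using beads_ge_runner_v[of t] unfolding bv_def .
    show "\<not> (dd n l u = dd n l v \<and> phi n l u < t \<and> t \<le> phi n l w\<^sub>1)" if "phi n l w\<^sub>2 < t" for t
      using that targets(7) by fastforce
  qed
  have U_out: "\<not> (dd n l (u + H) = dd n l u \<and> u < u + H \<and> u + H < w\<^sub>1)"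
  proof
    assume a: "dd n l (u + H) = dd n l u \<and> u < u + H \<and> u + H < w\<^sub>1"
    then have "w\<^sub>1 = v - H" "w\<^sub>2 = u + H" using w by (auto simp: doubleton_eq_iff)
    then show False using a dw2 order by auto
  qed
  have V_out: "\<not> v - H < w\<^sub>1" using w mv unfolding bead_move_def by (auto simp: doubleton_eq_iff)
  have u_low: "sum_list ss - int (sum_list mu) < u"
    using Bset_greater[OF pmu, of u] mv unfolding bead_move_def by auto
  have "{k \<in> beta_set (sum_list ss) lam. dd n l k = int bu \<and> u < k \<and> k < w\<^sub>1}
      = {k \<in> Bset (sum_list ss) mu - {u, v}. dd n l k = dd n l u \<and> u < k \<and> k < w\<^sub>1}"
    using mv_beta_set beta_set_eq_Bset_Un[OF pmu, of "sum_list ss"] U_out V_out u_low bu(3)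
    unfolding bead_move_def by auto
  moreover have "{k \<in> beta_set (sum_list ss) mu. dd n l k = int bv \<and> w\<^sub>2 < k \<and> k < v}
      = {k \<in> Bset (sum_list ss) mu - {u, v}. dd n l k = dd n l v \<and> w\<^sub>2 < k \<and> k < v}"
    using beta_set_eq_Bset_Un[OF pmu, of "sum_list ss"] u_low targets bv(3) by auto
  ultimately show ?thesis using ht_u ht_v by simp
qed

end

lemma ht_inversions_parity:
  assumes rp: "rho_pair l lams mus rho rho'"
    and runners: "dd n l (u + H) = dd n l u \<and> dd n l (v - H) = dd n l v \<or>
       dd n l (u + H) = dd n l v \<and> dd n l (v - H) = dd n l u \<and> dd n l u \<noteq> dd n l v"
  shows "even (ht rho + ht rho' + int (inversions_on (dd n l) (Bset (sum_list ss) mu))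
     + int (inversions_on (dd n l) (Bset (sum_list ss) lam))
     + of_bool (dd n l (u + H) \<noteq> dd n l u) + int (beads_passed (Bset (sum_list ss) mu) u v H))"
proof -
  define P where "P = Bset (sum_list ss) mu - {u, v}"
  have H: "0 < H" "u + H < v - H" using mv unfolding bead_move_def by auto
  have o: "u < u + H" "u + H < v - H" "v - H < v" using H by auto
  have fin: "finite P" unfolding P_def Bset_def by simp
  have nP: "u \<notin> P" "u + H \<notin> P" "v - H \<notin> P" "v \<notin> P" using mv unfolding P_def bead_move_def by auto
  have Bmu: "Bset (sum_list ss) mu = P \<union> {u, v}" and Blam: "Bset (sum_list ss) lam = P \<union> {u + H, v - H}"
    using mv unfolding P_def bead_move_def by auto
  have passed: "beads_passed (Bset (sum_list ss) mu) u v H = card (P \<inter> ({u<..<u + H} \<union> {v - H<..<v}))"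
    unfolding beads_passed_def Bmu using H by (intro arg_cong[where f = card]) auto
  from runners show ?thesis
  proof
    assume same: "dd n l (u + H) = dd n l u \<and> dd n l (v - H) = dd n l v"
    then have "ht rho + ht rho' = int (card {k \<in> P. dd n l k = dd n l u \<and> u < k \<and> k < u + H})
        + int (card {k \<in> P. dd n l k = dd n l v \<and> v - H < k \<and> k < v})"
      using ht_rho_pair[of "u + H" "v - H", OF _ _ _ _ rp] unfolding P_def by simp
    then have "ht rho + ht rho' + int (inversions_on (dd n l) (Bset (sum_list ss) mu))
        + int (inversions_on (dd n l) (Bset (sum_list ss) lam))
        + of_bool (dd n l (u + H) \<noteq> dd n l u) + int (beads_passed (Bset (sum_list ss) mu) u v H)
      = int (inversions_on (dd n l) (P \<union> {u, v})) + int (inversions_on (dd n l) (P \<union> {u + H, v - H}))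
        + int (card {k \<in> P. dd n l k = dd n l u \<and> u < k \<and> k < u + H})
        + int (card {k \<in> P. dd n l k = dd n l v \<and> v - H < k \<and> k < v})
        + int (card (P \<inter> ({u<..<u + H} \<union> {v - H<..<v})))"
      using same unfolding passed unfolding Bmu Blam by simp
    also have "even \<dots>"
      using inversions_on_parity_same[OF fin o nP, of "dd n l"] same by simp
    finally show ?thesis .
  next
    assume cross: "dd n l (u + H) = dd n l v \<and> dd n l (v - H) = dd n l u \<and> dd n l u \<noteq> dd n l v"
    then have "ht rho + ht rho' = int (card {k \<in> P. dd n l k = dd n l u \<and> u < k \<and> k < v - H})
        + int (card {k \<in> P. dd n l k = dd n l v \<and> u + H < k \<and> k < v})"
      using ht_rho_pair[of "v - H" "u + H", OF _ _ _ _ rp] unfolding P_def by (simp add: insert_commute)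
    then have "ht rho + ht rho' + int (inversions_on (dd n l) (Bset (sum_list ss) mu))
        + int (inversions_on (dd n l) (Bset (sum_list ss) lam))
        + of_bool (dd n l (u + H) \<noteq> dd n l u) + int (beads_passed (Bset (sum_list ss) mu) u v H)
      = int (inversions_on (dd n l) (P \<union> {u, v})) + int (inversions_on (dd n l) (P \<union> {u + H, v - H}))
        + int (card {k \<in> P. dd n l k = dd n l u \<and> u < k \<and> k < v - H})
        + int (card {k \<in> P. dd n l k = dd n l v \<and> u + H < k \<and> k < v})
        + 1 + int (card (P \<inter> ({u<..<u + H} \<union> {v - H<..<v})))"
      using cross unfolding passed unfolding Bmu Blam by simp
    also have "even \<dots>"
      using inversions_on_parity_cross[OF fin o nP, of "dd n l"] cross by simp
    finally show ?thesis .
  qed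
qed

end

lemma neg1pow_add: "neg1pow (a + b) = neg1pow a * neg1pow b"
  unfolding neg1pow_def by auto

lemma neg1pow_sign_identity:
  assumes "even (N + p + c)" and "even (t + i + j + of_bool b + c)"
  shows "neg1pow (N - 1) = neg1pow t * neg1pow (p - i + j) * (if b then 1 else -1)"
proof -
  have "N - 1 - (t + (p - i + j) + of_bool (\<not> b))
      = (N + p + c) + (t + i + j + of_bool b + c) - 2 * (t + p + j + c + 1)"
    by (cases b) simp_all
  then have "even (N - 1 - (t + (p - i + j) + of_bool (\<not> b)))"
    by (simp only:) (rule dvd_diff[OF dvd_add[OF assms]], simp)
  then have "neg1pow (N - 1) = neg1pow (t + (p - i + j) + of_bool (\<not> b))"
    unfolding neg1pow_def by (metis dvd_add_right_iff diff_add_cancel)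
  then show ?thesis by (cases b) (simp_all add: neg1pow_add neg1pow_def)
qed

theorem mainTheorem17:
  fixes n l m :: nat and ss :: "int list"
    and lams mus :: "nat list list" and lam mu :: "nat list"
    and rho rho' :: "(nat \<times> nat) set" and kss :: "int list list"
  assumes "n \<ge> 1" and "l \<ge> 1" and "m \<ge> 1" and "length ss = l"
    and "lams \<in> Pi_multi l m" and "mus \<in> Pi_multi l m"
    and "is_partition lam" and "is_partition mu"
    and "condH n l ss lams mus lam mu"
    and "rho_pair l lams mus rho rho'"
    and "(gammaH n l (sum_list ss) lam mu, deltaH n l (sum_list ss) lam mu) \<noteq> (0, 0)"
    and "\<exists>\<eta>\<in>{gammaH n l (sum_list ss) lam mu, deltaH n l (sum_list ss) lam mu}.
           [hH lam mu = \<eta>] (mod (int n * int l))"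
    and "good_seq n l (sum_list ss) lam mu kss"
  shows "neg1pow (int (length kss - 1) - 1)
         = neg1pow (ht rho + ht rho') * eps_LM n l (sum_list ss) lam mu
           * (if deltaH n l (sum_list ss) lam mu > 0 \<and>
                 [hH lam mu = deltaH n l (sum_list ss) lam mu] (mod (int n * int l))
              then 1 else -1)"
proof -
  note n = assms(1) and l = assms(2) and plam = assms(7) and pmu = assms(8)
  have cor: "corresp n l ss lams lam" "corresp n l ss mus mu" and r: "sum_list lam = sum_list mu"
    using assms(9) unfolding condH_def by auto
  obtain u v H where mv: "bead_move (Bset (sum_list ss) mu) (Bset (sum_list ss) lam) u v H"
    and parity_N: "even (int (length kss - 1) + int (card (index_pairs (sum_list mu)))
        + int (beads_passed (Bset (sum_list ss) mu) u v H))"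
    using good_seq_parity[OF n l assms(13) beta_strict_desc[OF pmu] beta_strict_desc[OF plam]] by blast
  note data = bead_move_diagram_data[OF plam pmu r mv]
  have gamma: "gammaH n l (sum_list ss) lam mu = (cc n l v - cc n l u) mod (int n * int l)"
    and delta: "deltaH n l (sum_list ss) lam mu = (int n * (dd n l v - dd n l u)) mod (int n * int l)"
    unfolding gammaH_def deltaH_def data by simp_all
  let ?cross = "deltaH n l (sum_list ss) lam mu > 0 \<and>
      [hH lam mu = deltaH n l (sum_list ss) lam mu] (mod (int n * int l))"
  have runners: "if ?cross
    then dd n l (u + H) = dd n l v \<and> dd n l (v - H) = dd n l u \<and> dd n l u \<noteq> dd n l v
    else dd n l (u + H) = dd n l u \<and> dd n l (v - H) = dd n l v"
    using moved_runners_cross[OF n l, of v u H] moved_runners_same[OF n l, of H v u] assms(12)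
    unfolding gamma delta data(1) by auto
  then have "even (ht rho + ht rho' + int (inversions_on (dd n l) (Bset (sum_list ss) mu))
     + int (inversions_on (dd n l) (Bset (sum_list ss) lam))
     + of_bool ?cross + int (beads_passed (Bset (sum_list ss) mu) u v H))"
    using ht_inversions_parity[OF n l assms(5,6) plam pmu cor r mv assms(10)] by (auto split: if_splits)
  then show ?thesis
    using neg1pow_sign_identity[OF parity_N] eps_LM_eq_inversions[OF plam pmu] by simp
qed

end
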